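(* Let $m\ge 2$ and let $\mathcal{R}_m^4$ be the rose graph with $N_m=3m+1$ nodes. The global mean hitting times of the TURW, NBCRW and MERW on $\mathcal{R}_m^4$ are $$\langle T\rangle^{\mathrm T}=\frac{20m(3m-1)}{3(3m+1)}=\frac{20(N_m-1)(N_m-2)}{9N_m},$$ $$\langle T\rangle^{\mathrm B}=\frac{2m^3+12m^2-14m+4}{(3m+1)\sqrt{2m-1}}+\frac{36m^2-8m}{3(3m+1)}=\frac{2N_m^2+30N_m-192}{9\sqrt{6N_m-15}}+\frac{268+20\sqrt{6N_m-15}}{9N_m\sqrt{6N_m-15}}+\frac{12N_m-32}{9},$$ $$\langle T\rangle^{\mathrm M}=\frac{6m^3+36m^2+10m-12}{9m+3}=\frac{2N_m^3+30N_m^2-36N_m-104}{27N_m}.$$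
   Context: The rose graph $\mathcal{R}_m^4$ ($m\ge2$) is obtained by gluing $m$ cycles of length 4 at a single common node, the hub; it has $3m+1$ nodes. Let $\mathbf{A}=(a_{ij})$ be the adjacency matrix and $d_i$ the degrees. TURW: $p_{ij}=a_{ij}/d_i$. MERW: with $\lambda_1$ the largest eigenvalue of $\mathbf{A}$ and $\psi_1$ the positive unit eigenvector, $p_{ij}=\frac{a_{ij}}{\lambda_1}\frac{\psi_{1j}}{\psi_{1i}}$. NBCRW: the non-backtracking matrix $\mathbf{B}$ is indexed by directed edges $i\to j$ (two per undirected edge) with $B_{i\to j,k\to l}=1$ if $j=k$ and $i\ne l$, else $0$; $v$ is a non-negative eigenvector for its leading (Perron–Frobenius) eigenvalue; $x_i=\sum_{j\in\mathcal{N}_i}v_{i\to j}$; and $p_{ij}=a_{ij}x_j/\sum_k a_{ik}x_k$. For a random walk on $N$ nodes, the hitting time $T_{ij}$ is the expected number of steps to first reach $j$ starting from $i$, and the global mean hitting time is $\langle T\rangle=\frac{1}{N(N-1)}\sum_{i}\sum_{j\ne i}T_{ij}$. *)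

theory Defs
  imports Complex_Main
begin

text \<open>Nodes 0..3m, hub = 0; the k-th 4-cycle (k < m) is 0 - 3k+1 - 3k+2 - 3k+3 - 0.\<close>

definition rose_nodes :: "nat \<Rightarrow> nat set" where
  "rose_nodes m = {0..<3*m+1}"

definition rose_edges :: "nat \<Rightarrow> (nat \<times> nat) set" where
  "rose_edges m = (\<Union>k<m. {(0, 3*k+1), (3*k+1, 3*k+2), (3*k+2, 3*k+3), (3*k+3, 0)})"

definition rose_adj :: "nat \<Rightarrow> nat \<Rightarrow> nat \<Rightarrow> real" where
  "rose_adj m i j = (if (i, j) \<in> rose_edges m \<or> (j, i) \<in> rose_edges m then 1 else 0)"

definition degree :: "nat set \<Rightarrow> (nat \<Rightarrow> nat \<Rightarrow> real) \<Rightarrow> nat \<Rightarrow> real" where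
  "degree V a i = (\<Sum>j\<in>V. a i j)"

definition turw :: "nat set \<Rightarrow> (nat \<Rightarrow> nat \<Rightarrow> real) \<Rightarrow> nat \<Rightarrow> nat \<Rightarrow> real" where
  "turw V a i j = a i j / degree V a i"

definition adj_eigenvalues :: "nat set \<Rightarrow> (nat \<Rightarrow> nat \<Rightarrow> real) \<Rightarrow> real set" where
  "adj_eigenvalues V a = {lam. \<exists>\<psi>. (\<exists>i\<in>V. \<psi> i \<noteq> 0) \<and> (\<forall>i\<in>V. (\<Sum>j\<in>V. a i j * \<psi> j) = lam * \<psi> i)}"

definition lambda1 :: "nat set \<Rightarrow> (nat \<Rightarrow> nat \<Rightarrow> real) \<Rightarrow> real" where
  "lambda1 V a = Max (adj_eigenvalues V a)"

definition psi1 :: "nat set \<Rightarrow> (nat \<Rightarrow> nat \<Rightarrow> real) \<Rightarrow> nat \<Rightarrow> real" where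
  "psi1 V a = (SOME \<psi>. (\<forall>i\<in>V. \<psi> i > 0) \<and> (\<Sum>i\<in>V. (\<psi> i)\<^sup>2) = 1 \<and>
      (\<forall>i\<in>V. (\<Sum>j\<in>V. a i j * \<psi> j) = lambda1 V a * \<psi> i))"

definition merw :: "nat set \<Rightarrow> (nat \<Rightarrow> nat \<Rightarrow> real) \<Rightarrow> nat \<Rightarrow> nat \<Rightarrow> real" where
  "merw V a i j = a i j / lambda1 V a * (psi1 V a j / psi1 V a i)"

definition dir_edges :: "nat set \<Rightarrow> (nat \<Rightarrow> nat \<Rightarrow> real) \<Rightarrow> (nat \<times> nat) set" where
  "dir_edges V a = {(i, j). i \<in> V \<and> j \<in> V \<and> a i j \<noteq> 0}"

definition nb_matrix :: "nat \<times> nat \<Rightarrow> nat \<times> nat \<Rightarrow> real" where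
  "nb_matrix e f = (if snd e = fst f \<and> fst e \<noteq> snd f then 1 else 0)"

definition nb_eigenvalues :: "nat set \<Rightarrow> (nat \<Rightarrow> nat \<Rightarrow> real) \<Rightarrow> complex set" where
  "nb_eigenvalues V a = {\<mu>. \<exists>v. (\<exists>e\<in>dir_edges V a. v e \<noteq> 0) \<and>
      (\<forall>e\<in>dir_edges V a. (\<Sum>f\<in>dir_edges V a. complex_of_real (nb_matrix e f) * v f) = \<mu> * v e)}"

definition nb_leading :: "nat set \<Rightarrow> (nat \<Rightarrow> nat \<Rightarrow> real) \<Rightarrow> real" where
  "nb_leading V a = Max (cmod ` nb_eigenvalues V a)"

definition nb_vec :: "nat set \<Rightarrow> (nat \<Rightarrow> nat \<Rightarrow> real) \<Rightarrow> nat \<times> nat \<Rightarrow> real" where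
  "nb_vec V a = (SOME v. (\<forall>e\<in>dir_edges V a. v e \<ge> 0) \<and> (\<exists>e\<in>dir_edges V a. v e \<noteq> 0) \<and>
      (\<forall>e\<in>dir_edges V a. (\<Sum>f\<in>dir_edges V a. nb_matrix e f * v f) = nb_leading V a * v e))"

definition nb_centrality :: "nat set \<Rightarrow> (nat \<Rightarrow> nat \<Rightarrow> real) \<Rightarrow> nat \<Rightarrow> real" where
  "nb_centrality V a i = (\<Sum>j\<in>{j\<in>V. a i j \<noteq> 0}. nb_vec V a (i, j))"

definition nbcrw :: "nat set \<Rightarrow> (nat \<Rightarrow> nat \<Rightarrow> real) \<Rightarrow> nat \<Rightarrow> nat \<Rightarrow> real" where
  "nbcrw V a i j = a i j * nb_centrality V a j / (\<Sum>k\<in>V. a i k * nb_centrality V a k)"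

fun first_passage :: "(nat \<Rightarrow> nat \<Rightarrow> real) \<Rightarrow> nat set \<Rightarrow> nat \<Rightarrow> nat \<Rightarrow> nat \<Rightarrow> real" where
  "first_passage P V j 0 i = 0"
| "first_passage P V j (Suc 0) i = P i j"
| "first_passage P V j (Suc (Suc n)) i = (\<Sum>k\<in>V - {j}. P i k * first_passage P V j (Suc n) k)"

definition hitting_time :: "(nat \<Rightarrow> nat \<Rightarrow> real) \<Rightarrow> nat set \<Rightarrow> nat \<Rightarrow> nat \<Rightarrow> real" where
  "hitting_time P V i j = (\<Sum>n. real n * first_passage P V j n i)"

definition mean_hitting_time :: "(nat \<Rightarrow> nat \<Rightarrow> real) \<Rightarrow> nat set \<Rightarrow> real" where
  "mean_hitting_time P V =
     (\<Sum>i\<in>V. \<Sum>j\<in>V - {i}. hitting_time P V i j) / (real (card V) * (real (card V) - 1))"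

end

theory Submission
  imports Defs
begin

(* On the rose graph all three walks have the same shape: from the hub they move to one of its
   2m neighbours uniformly, from the node opposite the hub they move to either side with
   probability 1/2, and from a neighbour of the hub they return to it with a probability p that
   depends on the walk: p = 1/2 for TURW, p = m/(m+1) for MERW (the Perron vector is proportional
   to 2m at the hub, sqrt(2m+2) next to it and 2 opposite to it) and p = m/(m + sqrt(2m-1)) for
   NBCRW (the leading eigenvalue is (2m-1)^(1/4) and the eigenvector grows geometrically along
   each petal).  Hitting times of a fixed target are the solution of h = 1 + P h off the target,
   which by symmetry has only a handful of distinct entries; summing them gives the mean hitting
   time as a rational function of m and p, into which the three values of p are substituted. *)

section \<open>Hitting times as solutions of a linear system\<close>

primrec restricted_iter :: "(nat \<Rightarrow> nat \<Rightarrow> real) \<Rightarrow> nat set \<Rightarrow> (nat \<Rightarrow> real) \<Rightarrow> nat \<Rightarrow> nat \<Rightarrow> real" where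
  "restricted_iter P W h 0 k = h k"
| "restricted_iter P W h (Suc n) k = (\<Sum>l\<in>W. P k l * restricted_iter P W h n l)"

text \<open>\<open>survival P W n k\<close> is the probability that the walk started at \<open>k\<close> stays in \<open>W\<close> for
  \<open>n\<close> steps.\<close>
abbreviation survival :: "(nat \<Rightarrow> nat \<Rightarrow> real) \<Rightarrow> nat set \<Rightarrow> nat \<Rightarrow> nat \<Rightarrow> real" where
  "survival P W \<equiv> restricted_iter P W (\<lambda>_. 1)"

lemma restricted_iter_nonneg:
  assumes "\<And>k l. k \<in> W \<Longrightarrow> l \<in> W \<Longrightarrow> P k l \<ge> 0" and "\<And>k. k \<in> W \<Longrightarrow> h k \<ge> 0" and "k \<in> W"
  shows "restricted_iter P W h n k \<ge> 0"
  using assms(3) by (induction n arbitrary: k) (auto intro!: sum_nonneg mult_nonneg_nonneg assms(1,2))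

lemma restricted_iter_mono:
  assumes "\<And>k l. k \<in> W \<Longrightarrow> l \<in> W \<Longrightarrow> P k l \<ge> 0" and "\<And>k. k \<in> W \<Longrightarrow> h k \<le> g k" and "k \<in> W"
  shows "restricted_iter P W h n k \<le> restricted_iter P W g n k"
  using assms(3) by (induction n arbitrary: k) (auto intro!: sum_mono mult_left_mono assms(1,2))

lemma restricted_iter_scale:
  "restricted_iter P W (\<lambda>k. c * h k) n k = c * restricted_iter P W h n k"
  by (induction n arbitrary: k) (simp_all add: sum_distrib_left algebra_simps)

lemma survival_antimono:
  assumes "\<And>k l. k \<in> W \<Longrightarrow> l \<in> W \<Longrightarrow> P k l \<ge> 0" and "\<And>k. k \<in> W \<Longrightarrow> (\<Sum>l\<in>W. P k l) \<le> 1"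
    and "k \<in> W"
  shows "survival P W (Suc n) k \<le> survival P W n k"
  using assms(3)
proof (induction n arbitrary: k)
  case 0
  then show ?case using assms(2) by simp
next
  case (Suc n)
  then show ?case by (auto intro!: sum_mono mult_left_mono assms(1))
qed

lemma restricted_iter_expansion:
  assumes "\<And>k. k \<in> W \<Longrightarrow> h k = 1 + (\<Sum>l\<in>W. P k l * h l)" and "k \<in> W"
  shows "h k = (\<Sum>n<N. survival P W n k) + restricted_iter P W h N k"
  using assms(2)
proof (induction N arbitrary: k)
  case 0
  then show ?case by simp
next
  case (Suc N)
  have "h k = 1 + (\<Sum>l\<in>W. P k l * ((\<Sum>n<N. survival P W n l) + restricted_iter P W h N l))"
    using assms(1)[OF Suc.prems] Suc.IH by (simp cong: sum.cong)
  also have "\<dots> = 1 + (\<Sum>n<N. survival P W (Suc n) k) + restricted_iter P W h (Suc N) k"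
    by (simp add: distrib_left sum.distrib sum_distrib_left sum.swap[of _ W])
  also have "\<dots> = (\<Sum>n<Suc N. survival P W n k) + restricted_iter P W h (Suc N) k"
    by (subst sum.lessThan_Suc_shift) simp
  finally show ?case .
qed

text \<open>The tail of the expansion is squeezed between 0 and a multiple of the survival probability,
  which tends to 0 because it is summable.\<close>
lemma survival_sums_solution:
  assumes "finite W" and Pnn: "\<And>k l. k \<in> W \<Longrightarrow> l \<in> W \<Longrightarrow> P k l \<ge> 0"
    and hnn: "\<And>k. k \<in> W \<Longrightarrow> h k \<ge> 0" and heq: "\<And>k. k \<in> W \<Longrightarrow> h k = 1 + (\<Sum>l\<in>W. P k l * h l)"
    and i: "i \<in> W"
  shows "(\<lambda>n. survival P W n i) sums h i"
proof -
  define c where "c = Max (h ` W)"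
  have tail_nonneg: "restricted_iter P W h n i \<ge> 0" for n
    using restricted_iter_nonneg[OF Pnn hnn i] .
  have tail_le: "restricted_iter P W h n i \<le> c * survival P W n i" for n
  proof -
    have "restricted_iter P W h n i \<le> restricted_iter P W (\<lambda>_. c * 1) n i"
      by (rule restricted_iter_mono[OF Pnn _ i]) (simp_all add: c_def assms(1))
    then show ?thesis by (simp only: restricted_iter_scale)
  qed
  have sm: "summable (\<lambda>n. survival P W n i)"
  proof (rule summableI_nonneg_bounded)
    show "0 \<le> survival P W n i" for n by (rule restricted_iter_nonneg[OF Pnn]) (simp_all add: i)
    show "(\<Sum>k<n. survival P W k i) \<le> h i" for n
      using restricted_iter_expansion[OF heq i, of n] tail_nonneg[of n] by linarith
  qed
  have "(\<lambda>n. restricted_iter P W h n i) \<longlonglongrightarrow> 0"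
  proof (rule tendsto_sandwich[where f = "\<lambda>_. 0" and h = "\<lambda>n. c * survival P W n i"])
    show "\<forall>\<^sub>F n in sequentially. 0 \<le> restricted_iter P W h n i" using tail_nonneg by simp
    show "\<forall>\<^sub>F n in sequentially. restricted_iter P W h n i \<le> c * survival P W n i"
      using tail_le by simp
    show "(\<lambda>n. c * survival P W n i) \<longlonglongrightarrow> 0"
      by (rule tendsto_mult_right_zero[OF summable_LIMSEQ_zero[OF sm]])
  qed simp
  then have "(\<lambda>N. h i - restricted_iter P W h N i) \<longlonglongrightarrow> h i - 0"
    by (intro tendsto_diff tendsto_const)
  moreover have "(\<lambda>N. h i - restricted_iter P W h N i) = (\<lambda>N. \<Sum>n<N. survival P W n i)"
    using restricted_iter_expansion[OF heq i] by (intro ext) (simp add: algebra_simps)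
  ultimately show ?thesis by (simp add: sums_def)
qed

lemma LIMSEQ_real_times_antimono_summable:
  fixes a :: "nat \<Rightarrow> real"
  assumes nonneg: "\<And>n. a n \<ge> 0" and antimono: "\<And>n. a (Suc n) \<le> a n" and "summable a"
  shows "(\<lambda>n. real n * a n) \<longlonglongrightarrow> 0"
proof (rule LIMSEQ_I)
  fix e :: real assume "e > 0"
  with \<open>summable a\<close> obtain N0 where N0: "\<And>m n. m \<ge> N0 \<Longrightarrow> norm (sum a {m..<n}) < e/2"
    unfolding summable_Cauchy by (metis half_gt_zero)
  have anti: "a n \<le> a j" if "j \<le> n" for j n
    using that by (induction n) (auto simp: le_Suc_eq intro: order_trans[OF antimono])
  show "\<exists>no. \<forall>n\<ge>no. norm (real n * a n - 0) < e"
  proof (intro exI allI impI)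
    fix n assume n: "n \<ge> 2*N0"
    define k where "k = n div 2"
    \<comment> \<open>the second half of the first \<open>n\<close> terms already dominates \<open>n a\<^sub>n / 2\<close>\<close>
    have "real (n - k) * a n = (\<Sum>i\<in>{k..<n}. a n)" by simp
    also have "\<dots> \<le> sum a {k..<n}" by (rule sum_mono) (auto intro: anti)
    also have "\<dots> < e/2" using N0[of k n] n by (simp add: k_def sum_nonneg nonneg)
    finally have "real (n - k) * a n < e/2" .
    moreover have "real n * a n \<le> 2 * real (n - k) * a n"
      using nonneg[of n] by (intro mult_right_mono) (auto simp: k_def)
    ultimately show "norm (real n * a n - 0) < e" using nonneg[of n] by simp
  qed
qed

lemma sum_index_times_diff:
  fixes f S :: "nat \<Rightarrow> real"
  assumes "\<And>n. f (Suc n) = S n - S (Suc n)"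
  shows "(\<Sum>n<Suc N. real n * f n) = (\<Sum>n<N. S n) - real N * S N"
  by (induction N) (simp_all add: assms algebra_simps)

lemma sums_index_times_diff:
  fixes f S :: "nat \<Rightarrow> real"
  assumes "\<And>n. f (Suc n) = S n - S (Suc n)" and "S sums s" and "(\<lambda>n. real n * S n) \<longlonglongrightarrow> 0"
  shows "(\<lambda>n. real n * f n) sums s"
proof -
  have "(\<lambda>N. (\<Sum>n<N. S n) - real N * S N) \<longlonglongrightarrow> s - 0"
    using assms(2,3) by (intro tendsto_diff) (simp_all add: sums_def)
  hence "(\<lambda>N. \<Sum>n<Suc N. real n * f n) \<longlonglongrightarrow> s"
    using sum_index_times_diff[of f S] assms(1) by simp
  then show ?thesis unfolding sums_def by (rule LIMSEQ_imp_Suc)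
qed

lemma first_passage_eq_survival_diff:
  assumes "finite V" and "j \<in> V" and row: "\<And>k. k \<in> V - {j} \<Longrightarrow> (\<Sum>l\<in>V. P k l) = 1"
    and "k \<in> V - {j}"
  shows "first_passage P V j (Suc n) k = survival P (V - {j}) n k - survival P (V - {j}) (Suc n) k"
  using assms(4)
proof (induction n arbitrary: k)
  case 0
  have "(\<Sum>l\<in>V. P k l) = P k j + (\<Sum>l\<in>V - {j}. P k l)"
    using assms(1,2) by (simp add: sum.remove)
  then show ?case using row[OF 0] by simp
next
  case (Suc n)
  then show ?case by (simp add: right_diff_distrib sum_subtractf)
qed

text \<open>With \<open>W = V - {j}\<close>, the first-passage probabilities are the decrements of the survival
  probabilities, so summation by parts turns the series defining the hitting time into the sum of
  the survival probabilities.\<close>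
theorem hitting_time_eq_solution:
  assumes fin: "finite V" and j: "j \<in> V" and i: "i \<in> V - {j}"
    and Pnn: "\<And>k l. k \<in> V \<Longrightarrow> l \<in> V \<Longrightarrow> P k l \<ge> 0"
    and row: "\<And>k. k \<in> V - {j} \<Longrightarrow> (\<Sum>l\<in>V. P k l) = 1"
    and hnn: "\<And>k. k \<in> V - {j} \<Longrightarrow> h k \<ge> 0"
    and heq: "\<And>k. k \<in> V - {j} \<Longrightarrow> h k = 1 + (\<Sum>l\<in>V - {j}. P k l * h l)"
  shows "hitting_time P V i j = h i"
proof -
  define W where "W = V - {j}"
  have iW: "i \<in> W" using i by (simp add: W_def)
  have PnnW: "P k l \<ge> 0" if "k \<in> W" "l \<in> W" for k l using Pnn that by (auto simp: W_def)
  have substochastic: "(\<Sum>l\<in>W. P k l) \<le> 1" if "k \<in> W" for k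
  proof -
    have "(\<Sum>l\<in>W. P k l) \<le> (\<Sum>l\<in>V. P k l)"
      using fin Pnn that by (intro sum_mono2) (auto simp: W_def)
    then show ?thesis using row[of k] that by (simp add: W_def)
  qed
  have sums: "(\<lambda>n. survival P W n i) sums h i"
    using survival_sums_solution[of W P h i] fin PnnW hnn heq i by (simp add: W_def)
  have "(\<lambda>n. real n * survival P W n i) \<longlonglongrightarrow> 0"
  proof (rule LIMSEQ_real_times_antimono_summable)
    show "0 \<le> survival P W n i" for n by (rule restricted_iter_nonneg[OF PnnW]) (simp_all add: iW)
    show "survival P W (Suc n) i \<le> survival P W n i" for n
      by (rule survival_antimono[OF PnnW substochastic iW])
  qed (use sums in \<open>rule sums_summable\<close>)
  with sums have "(\<lambda>n. real n * first_passage P V j n i) sums h i"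
    by (intro sums_index_times_diff[where S = "\<lambda>n. survival P W n i"])
      (use first_passage_eq_survival_diff[OF fin j row i] in \<open>simp_all only: W_def\<close>)
  then show ?thesis unfolding hitting_time_def by (rule sums_unique[symmetric])
qed

lemma mean_hitting_time_by_target:
  assumes "finite V"
  shows "mean_hitting_time P V =
    (\<Sum>j\<in>V. \<Sum>i\<in>V - {j}. hitting_time P V i j) / (real (card V) * (real (card V) - 1))"
proof -
  have "(\<Sum>i\<in>V. \<Sum>j\<in>V - {i}. hitting_time P V i j) = (\<Sum>j\<in>V. \<Sum>i\<in>V - {j}. hitting_time P V i j)"
  proof -
    have "{j \<in> V. i \<noteq> j} = V - {i}" "{i \<in> V. i \<noteq> j} = V - {j}" for i j by auto
    then show ?thesis
      using sum.swap_restrict[OF assms assms, of "\<lambda>i j. hitting_time P V i j" "\<lambda>i j. i \<noteq> j"]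
      by simp
  qed
  then show ?thesis by (simp add: mean_hitting_time_def)
qed

section \<open>The rose graph\<close>

lemma rose_nodes_iff [simp]: "n \<in> rose_nodes m \<longleftrightarrow> n < 3*m+1"
  by (simp add: rose_nodes_def)

lemma finite_rose_nodes [simp]: "finite (rose_nodes m)"
  by (simp add: rose_nodes_def)

lemma card_rose_nodes: "card (rose_nodes m) = 3*m+1"
  by (simp add: rose_nodes_def)

lemma sum_rose_nodes:
  "(\<Sum>n\<in>rose_nodes m. g n) = g 0 + (\<Sum>k<m. g (3*k+1) + g (3*k+2) + g (3*k+3))"
proof (induction m)
  case 0
  then show ?case by (simp add: rose_nodes_def)
next
  case (Suc m)
  have "rose_nodes (Suc m) = insert (3*m+3) (insert (3*m+2) (insert (3*m+1) (rose_nodes m)))"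
    by auto
  then show ?case using Suc by (simp add: add_ac)
qed

lemma rose_node_cases:
  assumes "n \<in> rose_nodes m"
  obtains "n = 0" | k where "k < m" "n = 3*k+1" | k where "k < m" "n = 3*k+2"
    | k where "k < m" "n = 3*k+3"
proof -
  have "n = 0 \<or> (\<exists>k<m. n = 3*k+1 \<or> n = 3*k+2 \<or> n = 3*k+3)"
    using assms by simp presburger
  then show ?thesis using that by blast
qed

lemma petal_index_neq [simp]:
  "3*a \<noteq> Suc (3*b)" "3*a \<noteq> Suc (Suc (3*b))" "Suc (3*a) \<noteq> 3*b" "Suc (Suc (3*a)) \<noteq> 3*b"
  "Suc (3*a) \<noteq> 3*b+3" "Suc (Suc (3*a)) \<noteq> 3*b+3" "3*b+3 \<noteq> Suc (3*a)" "3*b+3 \<noteq> Suc (Suc (3*a))"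
  by presburger+

lemma petal_index_mod3 [simp]:
  "(3*k+1) mod 3 = (1::nat)" "(3*k+2) mod 3 = (2::nat)" "(3*k+3) mod 3 = (0::nat)"
  "Suc (3*k) mod 3 = 1" "Suc (Suc (3*k)) mod 3 = 2"
  by (simp_all add: mod_Suc)

lemma rose_adj_hub: "rose_adj m 0 b = (if \<exists>k<m. b = 3*k+1 \<or> b = 3*k+3 then 1 else 0)"
  unfolding rose_adj_def rose_edges_def by auto

lemma rose_adj_first: "k < m \<Longrightarrow> rose_adj m (3*k+1) b = (if b = 0 \<or> b = 3*k+2 then 1 else 0)"
  unfolding rose_adj_def rose_edges_def by auto

lemma rose_adj_middle: "k < m \<Longrightarrow> rose_adj m (3*k+2) b = (if b = 3*k+1 \<or> b = 3*k+3 then 1 else 0)"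
  unfolding rose_adj_def rose_edges_def by auto

lemma rose_adj_last: "k < m \<Longrightarrow> rose_adj m (3*k+3) b = (if b = 0 \<or> b = 3*k+2 then 1 else 0)"
  unfolding rose_adj_def rose_edges_def by auto

lemma rose_adj_petal:
  assumes "k < m"
  shows "rose_adj m 0 (3*k+1) = 1" "rose_adj m 0 (3*k+3) = 1"
    "rose_adj m (3*k+1) 0 = 1" "rose_adj m (3*k+1) (3*k+2) = 1"
    "rose_adj m (3*k+2) (3*k+1) = 1" "rose_adj m (3*k+2) (3*k+3) = 1"
    "rose_adj m (3*k+3) 0 = 1" "rose_adj m (3*k+3) (3*k+2) = 1"
  using assms unfolding rose_adj_first[OF assms] rose_adj_middle[OF assms] rose_adj_last[OF assms]
  by (auto simp: rose_adj_hub)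

lemma rose_adj_nonzero_cases:
  assumes "rose_adj m a b \<noteq> 0"
  obtains k where "k < m" and
    "(a, b) \<in> {(0, 3*k+1), (3*k+1, 3*k+2), (3*k+2, 3*k+3), (3*k+3, 0),
               (0, 3*k+3), (3*k+3, 3*k+2), (3*k+2, 3*k+1), (3*k+1, 0)}"
proof -
  have "a \<in> rose_nodes m"
    using assms unfolding rose_adj_def rose_edges_def by (auto split: if_splits)
  then show ?thesis
  proof (cases rule: rose_node_cases)
    case 1
    then show ?thesis using assms that by (auto simp: rose_adj_hub split: if_splits)
  next
    case (2 k)
    then show ?thesis using assms that rose_adj_first[OF 2(1), of b] by (auto split: if_splits)
  next
    case (3 k)
    then show ?thesis using assms that rose_adj_middle[OF 3(1), of b] by (auto split: if_splits)
  next
    case (4 k)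
    then show ?thesis using assms that rose_adj_last[OF 4(1), of b] by (auto split: if_splits)
  qed
qed

lemma sum_rose_adj_hub:
  "(\<Sum>b\<in>rose_nodes m. rose_adj m 0 b * g b) = (\<Sum>k<m. g (3*k+1) + g (3*k+3))"
proof -
  have zero: "rose_adj m 0 0 = 0" "rose_adj m 0 (3*k+2) = 0" for k
    by (auto simp: rose_adj_hub)
  show ?thesis
    unfolding sum_rose_nodes zero mult_zero_left add_0_left
    by (intro sum.cong) (simp_all add: rose_adj_petal(1,2) rose_adj_petal(1)[simplified])
qed

lemma sum_rose_adj_pair:
  assumes "x \<in> rose_nodes m" "y \<in> rose_nodes m" "x \<noteq> y"
    and "\<And>b. rose_adj m a b = (if b = x \<or> b = y then 1 else 0)"
  shows "(\<Sum>b\<in>rose_nodes m. rose_adj m a b * g b) = g x + g y"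
proof -
  have "(\<Sum>b\<in>rose_nodes m. rose_adj m a b * g b) =
      (\<Sum>b\<in>rose_nodes m. (if b = x then g b else 0) + (if b = y then g b else 0))"
    using assms(3,4) by (intro sum.cong) auto
  then show ?thesis using assms(1,2) by (simp add: sum.distrib)
qed

lemma sum_rose_adj_first:
  "k < m \<Longrightarrow> (\<Sum>b\<in>rose_nodes m. rose_adj m (3*k+1) b * g b) = g 0 + g (3*k+2)"
  by (rule sum_rose_adj_pair[OF _ _ _ rose_adj_first]) auto

lemma sum_rose_adj_middle:
  "k < m \<Longrightarrow> (\<Sum>b\<in>rose_nodes m. rose_adj m (3*k+2) b * g b) = g (3*k+1) + g (3*k+3)"
  by (rule sum_rose_adj_pair[OF _ _ _ rose_adj_middle]) auto

lemma sum_rose_adj_last: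
  "k < m \<Longrightarrow> (\<Sum>b\<in>rose_nodes m. rose_adj m (3*k+3) b * g b) = g 0 + g (3*k+2)"
  by (rule sum_rose_adj_pair[OF _ _ _ rose_adj_last]) auto

lemma degree_rose:
  assumes "a \<in> rose_nodes m"
  shows "degree (rose_nodes m) (rose_adj m) a = (if a = 0 then 2 * real m else 2)"
  using assms
proof (cases rule: rose_node_cases)
  case 1
  then show ?thesis using sum_rose_adj_hub[of m "\<lambda>_. 1"] by (simp add: degree_def)
next
  case (2 k)
  then show ?thesis using sum_rose_adj_first[OF 2(1), of "\<lambda>_. 1"] by (simp add: degree_def)
next
  case (3 k)
  then show ?thesis using sum_rose_adj_middle[OF 3(1), of "\<lambda>_. 1"] by (simp add: degree_def)
next
  case (4 k)
  then show ?thesis using sum_rose_adj_last[OF 4(1), of "\<lambda>_. 1"] by (simp add: degree_def)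
qed

section \<open>Walks on the rose graph with a given return probability\<close>

definition rose_walk :: "nat \<Rightarrow> real \<Rightarrow> nat \<Rightarrow> nat \<Rightarrow> real" where
  "rose_walk m p a b = rose_adj m a b *
     (if a = 0 then 1 / (2 * real m) else if a mod 3 = 2 then 1/2 else if b = 0 then p else 1 - p)"

lemma rose_walk_eqI:
  assumes "\<And>a b. rose_adj m a b = 0 \<Longrightarrow> P a b = 0"
    and "\<And>k. k < m \<Longrightarrow> P 0 (3*k+1) = 1 / (2 * real m) \<and> P 0 (3*k+3) = 1 / (2 * real m)
       \<and> P (3*k+1) 0 = p \<and> P (3*k+1) (3*k+2) = 1 - p
       \<and> P (3*k+2) (3*k+1) = 1/2 \<and> P (3*k+2) (3*k+3) = 1/2
       \<and> P (3*k+3) 0 = p \<and> P (3*k+3) (3*k+2) = 1 - p"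
  shows "P = rose_walk m p"
proof (intro ext)
  fix a b
  show "P a b = rose_walk m p a b"
  proof (cases "rose_adj m a b = 0")
    case True
    then show ?thesis using assms(1) by (simp add: rose_walk_def)
  next
    case False
    then obtain k where k: "k < m" and "(a, b) \<in> {(0, 3*k+1), (3*k+1, 3*k+2), (3*k+2, 3*k+3),
      (3*k+3, 0), (0, 3*k+3), (3*k+3, 3*k+2), (3*k+2, 3*k+1), (3*k+1, 0)}"
      by (rule rose_adj_nonzero_cases)
    then show ?thesis using assms(2)[OF k] rose_adj_petal[OF k]
      by (elim insertE emptyE) (simp_all add: rose_walk_def)
  qed
qed

lemma rose_walk_nonneg: "0 \<le> p \<Longrightarrow> p \<le> 1 \<Longrightarrow> rose_walk m p a b \<ge> 0"
  unfolding rose_walk_def rose_adj_def by auto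

lemma sum_rose_walk_hub:
  "(\<Sum>b\<in>rose_nodes m. rose_walk m p 0 b * g b) = (\<Sum>k<m. g (3*k+1) + g (3*k+3)) / (2 * real m)"
  using sum_rose_adj_hub[of m "\<lambda>b. g b / (2 * real m)"]
  by (simp add: rose_walk_def sum_divide_distrib add_divide_distrib)

lemma sum_rose_walk_first:
  "k < m \<Longrightarrow> (\<Sum>b\<in>rose_nodes m. rose_walk m p (3*k+1) b * g b) = p * g 0 + (1 - p) * g (3*k+2)"
  using sum_rose_adj_first[of k m "\<lambda>b. (if b = 0 then p else 1 - p) * g b"]
  by (simp add: rose_walk_def mult.assoc)

lemma sum_rose_walk_middle:
  "k < m \<Longrightarrow> (\<Sum>b\<in>rose_nodes m. rose_walk m p (3*k+2) b * g b) = (g (3*k+1) + g (3*k+3)) / 2"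
  using sum_rose_adj_middle[of k m "\<lambda>b. g b / 2"]
  by (simp add: rose_walk_def add_divide_distrib)

lemma sum_rose_walk_last:
  "k < m \<Longrightarrow> (\<Sum>b\<in>rose_nodes m. rose_walk m p (3*k+3) b * g b) = p * g 0 + (1 - p) * g (3*k+2)"
  using sum_rose_adj_last[of k m "\<lambda>b. (if b = 0 then p else 1 - p) * g b"]
  by (simp add: rose_walk_def mult.assoc)

lemma rose_walk_row_sum:
  assumes "m \<ge> 1" "a \<in> rose_nodes m"
  shows "(\<Sum>b\<in>rose_nodes m. rose_walk m p a b) = 1"
  using assms(2)
  by (cases rule: rose_node_cases)
    (use assms(1) sum_rose_walk_hub[of m p "\<lambda>_. 1"] sum_rose_walk_first[of _ m p "\<lambda>_. 1"]
       sum_rose_walk_middle[of _ m p "\<lambda>_. 1"] sum_rose_walk_last[of _ m p "\<lambda>_. 1"] in simp_all)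

lemma sum_hitting_time_rose_walk:
  assumes m: "m \<ge> 1" and p: "0 < p" "p < 1" and j: "j \<in> rose_nodes m" and "h j = 0"
    and hnn: "\<And>n. n \<in> rose_nodes m \<Longrightarrow> n \<noteq> j \<Longrightarrow> h n \<ge> 0"
    and heq: "\<And>n. n \<in> rose_nodes m \<Longrightarrow> n \<noteq> j \<Longrightarrow>
      h n = 1 + (\<Sum>l\<in>rose_nodes m. rose_walk m p n l * h l)"
  shows "(\<Sum>i\<in>rose_nodes m - {j}. hitting_time (rose_walk m p) (rose_nodes m) i j)
    = (\<Sum>i\<in>rose_nodes m. h i)"
proof -
  have drop_target: "(\<Sum>l\<in>rose_nodes m. g l * h l) = (\<Sum>l\<in>rose_nodes m - {j}. g l * h l)" for g
    using sum.remove[OF finite_rose_nodes j, of "\<lambda>l. g l * h l"] \<open>h j = 0\<close> by simp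
  have "hitting_time (rose_walk m p) (rose_nodes m) i j = h i" if "i \<in> rose_nodes m - {j}" for i
    using finite_rose_nodes j that rose_walk_nonneg rose_walk_row_sum[OF m] hnn heq p
    by (intro hitting_time_eq_solution) (auto simp: drop_target)
  then have "(\<Sum>i\<in>rose_nodes m - {j}. hitting_time (rose_walk m p) (rose_nodes m) i j)
      = (\<Sum>i\<in>rose_nodes m - {j}. h i)" by simp
  also have "\<dots> = (\<Sum>i\<in>rose_nodes m. h i)"
    using sum.remove[OF finite_rose_nodes j, of h] \<open>h j = 0\<close> by simp
  finally show ?thesis .
qed

text \<open>By symmetry, the expected time to hit a node of petal \<open>k\<^sub>0\<close> from a node of another petal
  depends only on the position of the start node within its petal.\<close>
definition petal_fun :: "nat \<Rightarrow> real \<Rightarrow> real \<Rightarrow> real \<Rightarrow> real \<Rightarrow> real \<Rightarrow> real \<Rightarrow> nat \<Rightarrow> real" where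
  "petal_fun k0 x0 a1 a2 a3 b1 b2 n =
    (if n = 0 then x0
     else if (n-1) div 3 = k0 then (if (n-1) mod 3 = 0 then a1 else if (n-1) mod 3 = 1 then a2 else a3)
     else if (n-1) mod 3 = 1 then b2 else b1)"

lemma petal_fun_simps [simp]:
  "petal_fun k0 x0 a1 a2 a3 b1 b2 0 = x0"
  "petal_fun k0 x0 a1 a2 a3 b1 b2 (3*k+1) = (if k = k0 then a1 else b1)"
  "petal_fun k0 x0 a1 a2 a3 b1 b2 (3*k+2) = (if k = k0 then a2 else b2)"
  "petal_fun k0 x0 a1 a2 a3 b1 b2 (3*k+3) = (if k = k0 then a3 else b1)"
proof -
  have d: "(3*k+1-1) div 3 = k" "(3*k+2-1) div 3 = k" "(3*k+3-1) div 3 = k"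
    "(3*k+1-1) mod 3 = 0" "(3*k+2-1) mod 3 = 1" "(3*k+3-1) mod 3 = (2::nat)"
    by (simp_all add: mod_Suc)
  show "petal_fun k0 x0 a1 a2 a3 b1 b2 0 = x0"
    "petal_fun k0 x0 a1 a2 a3 b1 b2 (3*k+1) = (if k = k0 then a1 else b1)"
    "petal_fun k0 x0 a1 a2 a3 b1 b2 (3*k+2) = (if k = k0 then a2 else b2)"
    "petal_fun k0 x0 a1 a2 a3 b1 b2 (3*k+3) = (if k = k0 then a3 else b1)"
    unfolding petal_fun_def by (simp_all only: d) simp_all
qed

lemmas petal_fun_Suc_simps [simp] = petal_fun_simps(2-4)[simplified]

lemma sum_if_eq_index:
  assumes "k0 < m"
  shows "(\<Sum>k<m. if k = k0 then (x::real) else y) = x + (real m - 1) * y"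
proof -
  have "(\<Sum>k<m. if k = k0 then x else y) = (\<Sum>k<m. y + (if k = k0 then x - y else 0))"
    by (intro sum.cong) auto
  then show ?thesis using assms by (simp add: sum.distrib algebra_simps)
qed

lemma sum_petal_fun:
  assumes "k0 < m"
  shows "(\<Sum>n\<in>rose_nodes m. petal_fun k0 x0 a1 a2 a3 b1 b2 n)
    = x0 + a1 + a2 + a3 + (real m - 1) * (2*b1 + b2)"
proof -
  have "(\<Sum>n\<in>rose_nodes m. petal_fun k0 x0 a1 a2 a3 b1 b2 n) =
     x0 + (\<Sum>k<m. if k = k0 then a1 + a2 + a3 else 2*b1 + b2)"
    unfolding sum_rose_nodes by (simp del: petal_fun_Suc_simps) (intro sum.cong, auto)
  then show ?thesis using sum_if_eq_index[OF assms] by simp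
qed

lemma sum_hitting_time_rose_walk_petal_fun:
  fixes x0 a1 a2 a3 b1 b2 :: real
  assumes m: "m \<ge> 1" and p: "0 < p" "p < 1" and k0: "k0 < m"
    and j: "j \<in> {0, 3*k0+1, 3*k0+2, 3*k0+3}" and "petal_fun k0 x0 a1 a2 a3 b1 b2 j = 0"
    and "x0 \<ge> 0" "a1 \<ge> 0" "a2 \<ge> 0" "a3 \<ge> 0" "b1 \<ge> 0" "b2 \<ge> 0"
    and hub: "j \<noteq> 0 \<Longrightarrow> x0 = 1 + (a1 + a3 + (real m - 1) * (2*b1)) / (2 * real m)"
    and first: "j \<noteq> 3*k0+1 \<Longrightarrow> a1 = 1 + p * x0 + (1-p) * a2"
    and middle: "j \<noteq> 3*k0+2 \<Longrightarrow> a2 = 1 + (a1 + a3) / 2"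
    and last: "j \<noteq> 3*k0+3 \<Longrightarrow> a3 = 1 + p * x0 + (1-p) * a2"
    and other_end: "b1 = 1 + p * x0 + (1-p) * b2"
    and other_middle: "b2 = 1 + (b1 + b1) / 2"
  shows "(\<Sum>i\<in>rose_nodes m - {j}. hitting_time (rose_walk m p) (rose_nodes m) i j)
      = x0 + a1 + a2 + a3 + (real m - 1) * (2*b1 + b2)"
proof -
  define h where "h = petal_fun k0 x0 a1 a2 a3 b1 b2"
  have "(\<Sum>i\<in>rose_nodes m - {j}. hitting_time (rose_walk m p) (rose_nodes m) i j) = (\<Sum>i\<in>rose_nodes m. h i)"
  proof (rule sum_hitting_time_rose_walk[OF m p])
    show "j \<in> rose_nodes m" using j k0 by auto
    show "h j = 0" using assms(6) h_def by simp
    show "0 \<le> h n" for n using assms(7-12) unfolding h_def petal_fun_def by auto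
    show "h n = 1 + (\<Sum>l\<in>rose_nodes m. rose_walk m p n l * h l)"
      if n: "n \<in> rose_nodes m" "n \<noteq> j" for n
      using n(1)
    proof (cases rule: rose_node_cases)
      case 1
      have "(\<Sum>k<m. h (3*k+1) + h (3*k+3)) = (\<Sum>k<m. if k = k0 then a1 + a3 else 2 * b1)"
        unfolding h_def by (intro sum.cong) auto
      then show ?thesis
        using 1 n(2) hub sum_rose_walk_hub[of m p h] sum_if_eq_index[OF k0] by (simp add: h_def)
    next
      case (2 k)
      then show ?thesis using n(2) first other_end sum_rose_walk_first[OF 2(1), of p h]
        by (cases "k = k0") (simp_all add: h_def)
    next
      case (3 k)
      then show ?thesis using n(2) middle other_middle sum_rose_walk_middle[OF 3(1), of p h]
        by (cases "k = k0") (simp_all add: h_def)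
    next
      case (4 k)
      then show ?thesis using n(2) last other_end sum_rose_walk_last[OF 4(1), of p h]
        by (cases "k = k0") (simp_all add: h_def)
    qed
  qed
  then show ?thesis unfolding h_def sum_petal_fun[OF k0] .
qed

lemma sum_hitting_time_rose_walk_hub:
  assumes m: "m \<ge> 1" and p: "0 < p" "p < 1"
  shows "(\<Sum>i\<in>rose_nodes m - {0}. hitting_time (rose_walk m p) (rose_nodes m) i 0)
    = real m * (6 - 2*p) / p"
proof -
  have "0 < m" using m by simp
  have "(\<Sum>i\<in>rose_nodes m - {0}. hitting_time (rose_walk m p) (rose_nodes m) i 0) =
      0 + (2-p)/p + 2/p + (2-p)/p + (real m - 1) * (2 * ((2-p)/p) + 2/p)"
    by (rule sum_hitting_time_rose_walk_petal_fun[OF m p \<open>0 < m\<close>])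
      (use m p in \<open>simp_all add: field_simps\<close>)
  also have "\<dots> = real m * (6 - 2*p) / p" using p by (simp add: field_simps)
  finally show ?thesis .
qed

lemma sum_hitting_time_rose_walk_middle:
  assumes m: "m \<ge> 1" and p: "0 < p" "p < 1" and k0: "k0 < m"
  defines "H \<equiv> 2 * (real m - 1 + p) / (p * (1 - p))"
  shows "(\<Sum>i\<in>rose_nodes m - {3*k0+2}. hitting_time (rose_walk m p) (rose_nodes m) i (3*k0+2))
    = (3 * real m - 2 + 2*p) * H + 2 + (real m - 1) * (6 - 2*p) / p"
proof -
  have nz: "p \<noteq> 0" "1 - p \<noteq> 0" "real m \<noteq> 0" using m p by auto
  have H: "H * (p * (1 - p)) = 2 * (real m - 1 + p)" "H \<ge> 0"
    unfolding H_def using nz m p by (simp, intro divide_nonneg_pos, simp_all)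
  have "(\<Sum>i\<in>rose_nodes m - {3*k0+2}. hitting_time (rose_walk m p) (rose_nodes m) i (3*k0+2)) =
      H + (1 + p * H) + 0 + (1 + p * H) + (real m - 1) * (2 * ((2-p)/p + H) + (2/p + H))"
    (is "_ = ?sum")
  proof (rule sum_hitting_time_rose_walk_petal_fun[OF m p k0])
    show "H = 1 + (1 + p * H + (1 + p * H) + (real m - 1) * (2 * ((2-p)/p + H))) / (2 * real m)"
      using nz H(1) by (simp add: field_simps; algebra)
    show "(2 - p) / p + H = 1 + p * H + (1 - p) * (2 / p + H)"
      using nz by (simp add: field_simps; algebra)
    show "2 / p + H = 1 + ((2 - p) / p + H + ((2 - p) / p + H)) / 2"
      using nz by (simp add: field_simps; algebra)
  qed (use H(2) p in simp_all)
  also have "?sum = (3 * real m - 2 + 2*p) * H + 2 + (real m - 1) * (6 - 2*p) / p"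
    using nz by (simp add: field_simps)
  finally show ?thesis .
qed

lemma sum_hitting_time_rose_walk_end:
  assumes m: "m \<ge> 1" and p: "0 < p" "p < 1" and k0: "k0 < m" and j: "j \<in> {3*k0+1, 3*k0+3}"
  defines "H \<equiv> 2 * real m + 1 + 2 * (real m - 1) / p"
  shows "(\<Sum>i\<in>rose_nodes m - {j}. hitting_time (rose_walk m p) (rose_nodes m) i j)
    = (3 * real m - 2) * H + 6 * real m + 1 + (real m - 1) * (6 - 2*p) / p"
proof -
  have nz: "p \<noteq> 0" "real m \<noteq> 0" using m p by auto
  have H: "H * p = (2 * real m + 1) * p + 2 * (real m - 1)" "H \<ge> 0"
    unfolding H_def using m p
    by (simp add: field_simps) (intro add_nonneg_nonneg divide_nonneg_pos, use m p in simp_all)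
  define a1 where "a1 = (if j = 3*k0+1 then 0 else 4 * real m)"
  define a3 where "a3 = (if j = 3*k0+3 then 0 else 4 * real m)"
  have "(\<Sum>i\<in>rose_nodes m - {j}. hitting_time (rose_walk m p) (rose_nodes m) i j) =
      H + a1 + (2 * real m + 1) + a3 + (real m - 1) * (2 * ((2-p)/p + H) + (2/p + H))"
    (is "_ = ?sum")
  proof (rule sum_hitting_time_rose_walk_petal_fun[OF m p k0])
    have a13: "a1 + a3 = 4 * real m" using j by (auto simp: a1_def a3_def)
    then show "2 * real m + 1 = 1 + (a1 + a3) / 2" by simp
    show "H = 1 + (a1 + a3 + (real m - 1) * (2 * ((2-p)/p + H))) / (2 * real m)"
      unfolding a13 using nz H(1) by (simp add: field_simps; algebra)
    show "a1 = 1 + p * H + (1 - p) * (2 * real m + 1)" if "j \<noteq> 3*k0+1"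
      using that H(1) by (simp add: a1_def algebra_simps)
    show "a3 = 1 + p * H + (1 - p) * (2 * real m + 1)" if "j \<noteq> 3*k0+3"
      using that H(1) by (simp add: a3_def algebra_simps)
    show "(2 - p) / p + H = 1 + p * H + (1 - p) * (2 / p + H)"
      using nz by (simp add: field_simps; algebra)
    show "2 / p + H = 1 + ((2 - p) / p + H + ((2 - p) / p + H)) / 2"
      using nz by (simp add: field_simps; algebra)
  qed (use j H(2) p in \<open>auto simp: a1_def a3_def\<close>)
  also have "?sum = (3 * real m - 2) * H + 6 * real m + 1 + (real m - 1) * (6 - 2*p) / p"
    using nz j by (auto simp: a1_def a3_def field_simps)
  finally show ?thesis .
qed

theorem mean_hitting_time_rose_walk:
  assumes m: "m \<ge> 1" and p: "0 < p" "p < 1"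
  shows "mean_hitting_time (rose_walk m p) (rose_nodes m)
    = real m * (18 * real m - 12 + 16 * p - (4 + 12 * real m) * p^2) / (3 * (3 * real m + 1) * p * (1 - p))"
proof -
  define T where "T j = (\<Sum>i\<in>rose_nodes m - {j}. hitting_time (rose_walk m p) (rose_nodes m) i j)" for j
  define Hm where "Hm = 2 * (real m - 1 + p) / (p * (1 - p))"
  define He where "He = 2 * real m + 1 + 2 * (real m - 1) / p"
  define Tm where "Tm = (3 * real m - 2 + 2*p) * Hm + 2 + (real m - 1) * (6 - 2*p) / p"
  define Te where "Te = (3 * real m - 2) * He + 6 * real m + 1 + (real m - 1) * (6 - 2*p) / p"
  have "T (3*k+1) + T (3*k+2) + T (3*k+3) = Tm + 2 * Te" if "k < m" for k
    using sum_hitting_time_rose_walk_middle[OF m p that] sum_hitting_time_rose_walk_end[OF m p that]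
    unfolding T_def Tm_def Te_def Hm_def He_def by simp
  then have "(\<Sum>j\<in>rose_nodes m. T j) = real m * (6 - 2*p) / p + real m * (Tm + 2 * Te)"
    unfolding sum_rose_nodes using sum_hitting_time_rose_walk_hub[OF m p] by (simp add: T_def)
  also have "\<dots> = real m ^ 2 * (18 * real m - 12 + 16 * p - (4 + 12 * real m) * p^2) / (p * (1 - p))"
    using p unfolding Tm_def Te_def Hm_def He_def by (simp add: field_simps) algebra
  finally have total: "(\<Sum>j\<in>rose_nodes m. T j) = \<dots>" .
  have card: "real (card (rose_nodes m)) * (real (card (rose_nodes m)) - 1) = 3 * real m * (3 * real m + 1)"
    by (simp add: card_rose_nodes algebra_simps)
  have cancel: "real m ^ 2 * Q / (p * (1 - p)) / (3 * real m * (3 * real m + 1))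
      = real m * Q / (3 * (3 * real m + 1) * p * (1 - p))" for Q
  proof -
    have "p * (1 - p) * (3 * real m * (3 * real m + 1)) = real m * (3 * (3 * real m + 1) * p * (1 - p))"
      by (simp add: algebra_simps)
    moreover have "real m \<noteq> 0" using m by simp
    ultimately show ?thesis
      by (simp add: divide_divide_eq_left power2_eq_square mult.assoc)
  qed
  show ?thesis
    unfolding mean_hitting_time_by_target[OF finite_rose_nodes] T_def[symmetric] total card
    by (rule cancel)
qed

section \<open>TURW and MERW\<close>

lemma turw_rose: "m \<ge> 1 \<Longrightarrow> turw (rose_nodes m) (rose_adj m) = rose_walk m (1/2)"
proof (rule rose_walk_eqI)
  show "turw (rose_nodes m) (rose_adj m) a b = 0" if "rose_adj m a b = 0" for a b
    using that by (simp add: turw_def)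
  fix k assume "m \<ge> 1" "k < m"
  then have "degree (rose_nodes m) (rose_adj m) n = (if n = 0 then 2 * real m else 2)"
    if "n \<in> {0, 3*k+1, 3*k+2, 3*k+3}" for n
    using that by (intro degree_rose) auto
  then show "turw (rose_nodes m) (rose_adj m) 0 (3*k+1) = 1 / (2 * real m)
      \<and> turw (rose_nodes m) (rose_adj m) 0 (3*k+3) = 1 / (2 * real m)
      \<and> turw (rose_nodes m) (rose_adj m) (3*k+1) 0 = 1/2
      \<and> turw (rose_nodes m) (rose_adj m) (3*k+1) (3*k+2) = 1 - 1/2
      \<and> turw (rose_nodes m) (rose_adj m) (3*k+2) (3*k+1) = 1/2
      \<and> turw (rose_nodes m) (rose_adj m) (3*k+2) (3*k+3) = 1/2
      \<and> turw (rose_nodes m) (rose_adj m) (3*k+3) 0 = 1/2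
      \<and> turw (rose_nodes m) (rose_adj m) (3*k+3) (3*k+2) = 1 - 1/2"
    unfolding turw_def using rose_adj_petal[OF \<open>k < m\<close>] by simp
qed

lemma rose_adj_eigen_iff:
  "(\<forall>i\<in>rose_nodes m. (\<Sum>j\<in>rose_nodes m. rose_adj m i j * \<psi> j) = lam * \<psi> i) \<longleftrightarrow>
   ((\<Sum>k<m. \<psi> (3*k+1) + \<psi> (3*k+3)) = lam * \<psi> 0 \<and>
    (\<forall>k<m. \<psi> 0 + \<psi> (3*k+2) = lam * \<psi> (3*k+1) \<and> \<psi> (3*k+1) + \<psi> (3*k+3) = lam * \<psi> (3*k+2)
       \<and> \<psi> 0 + \<psi> (3*k+2) = lam * \<psi> (3*k+3)))" (is "?L \<longleftrightarrow> ?R")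
proof
  assume L: ?L
  have "\<psi> 0 + \<psi> (3*k+2) = lam * \<psi> (3*k+1) \<and> \<psi> (3*k+1) + \<psi> (3*k+3) = lam * \<psi> (3*k+2)
       \<and> \<psi> 0 + \<psi> (3*k+2) = lam * \<psi> (3*k+3)" if k: "k < m" for k
  proof (intro conjI)
    have V: "3*k+1 \<in> rose_nodes m" "3*k+2 \<in> rose_nodes m" "3*k+3 \<in> rose_nodes m" using k by auto
    show "\<psi> 0 + \<psi> (3*k+2) = lam * \<psi> (3*k+1)"
      using L[rule_format, OF V(1)] sum_rose_adj_first[OF k, of \<psi>] by linarith
    show "\<psi> (3*k+1) + \<psi> (3*k+3) = lam * \<psi> (3*k+2)"
      using L[rule_format, OF V(2)] sum_rose_adj_middle[OF k, of \<psi>] by linarith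
    show "\<psi> 0 + \<psi> (3*k+2) = lam * \<psi> (3*k+3)"
      using L[rule_format, OF V(3)] sum_rose_adj_last[OF k, of \<psi>] by linarith
  qed
  moreover have "(\<Sum>k<m. \<psi> (3*k+1) + \<psi> (3*k+3)) = lam * \<psi> 0"
    using L[rule_format, of 0] sum_rose_adj_hub[of m \<psi>] by simp
  ultimately show ?R by blast
next
  assume R: ?R
  show ?L
  proof
    fix i assume "i \<in> rose_nodes m"
    then show "(\<Sum>j\<in>rose_nodes m. rose_adj m i j * \<psi> j) = lam * \<psi> i"
    proof (cases rule: rose_node_cases)
      case 1
      have "(\<Sum>j\<in>rose_nodes m. rose_adj m 0 j * \<psi> j) = lam * \<psi> 0"
        using conjunct1[OF R] sum_rose_adj_hub[of m \<psi>] by linarith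
      then show ?thesis using 1 by simp
    next
      case (2 k)
      then show ?thesis using conjunct2[OF R] sum_rose_adj_first[OF 2(1), of \<psi>] 2(1) by auto
    next
      case (3 k)
      then show ?thesis using conjunct2[OF R] sum_rose_adj_middle[OF 3(1), of \<psi>] 3(1) by auto
    next
      case (4 k)
      then show ?thesis using conjunct2[OF R] sum_rose_adj_last[OF 4(1), of \<psi>] 4(1) by auto
    qed
  qed
qed

lemma petal_eigen_equations:
  fixes lam x0 x1 x2 x3 :: real
  assumes "x0 + x2 = lam * x1" "x1 + x3 = lam * x2" "x0 + x2 = lam * x3" "lam \<noteq> 0" "lam^2 \<noteq> 2"
  shows "x1 = lam * x0 / (lam^2 - 2)" "x3 = x1" "x2 = 2 * x1 / lam"
proof -
  show x3: "x3 = x1" using assms(1,3,4) by (metis mult_left_cancel)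
  show x2: "x2 = 2 * x1 / lam" using assms(2,4) x3 by (simp add: field_simps)
  have "lam^2 * x1 = lam * x0 + 2 * x1"
    using assms(1,4) x2 by (simp add: power2_eq_square field_simps)
  then show "x1 = lam * x0 / (lam^2 - 2)" using assms(5) by (simp add: field_simps)
qed

lemma rose_adj_eigenvector_petal:
  fixes lam :: real
  assumes "\<forall>i\<in>rose_nodes m. (\<Sum>j\<in>rose_nodes m. rose_adj m i j * \<psi> j) = lam * \<psi> i"
    and "lam \<noteq> 0" "lam^2 \<noteq> 2" "k < m"
  shows "\<psi> (3*k+1) = lam * \<psi> 0 / (lam^2 - 2)" "\<psi> (3*k+3) = \<psi> (3*k+1)" "\<psi> (3*k+2) = 2 * \<psi> (3*k+1) / lam"
proof -
  have "\<psi> 0 + \<psi> (3*k+2) = lam * \<psi> (3*k+1)" "\<psi> (3*k+1) + \<psi> (3*k+3) = lam * \<psi> (3*k+2)"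
    "\<psi> 0 + \<psi> (3*k+2) = lam * \<psi> (3*k+3)"
    using conjunct2[OF assms(1)[unfolded rose_adj_eigen_iff]] assms(4) by blast+
  from petal_eigen_equations[OF this assms(2,3)]
  show "\<psi> (3*k+1) = lam * \<psi> 0 / (lam^2 - 2)" "\<psi> (3*k+3) = \<psi> (3*k+1)" "\<psi> (3*k+2) = 2 * \<psi> (3*k+1) / lam" .
qed

lemma rose_adj_eigenvalue:
  fixes lam :: real
  assumes eig: "\<forall>i\<in>rose_nodes m. (\<Sum>j\<in>rose_nodes m. rose_adj m i j * \<psi> j) = lam * \<psi> i"
    and "lam \<noteq> 0" "lam^2 \<noteq> 2" "\<psi> 0 \<noteq> 0"
  shows "lam^2 = 2 * real m + 2"
proof -
  note petal = rose_adj_eigenvector_petal[OF eig assms(2,3)]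
  have "lam * \<psi> 0 = (\<Sum>k<m. \<psi> (3*k+1) + \<psi> (3*k+3))"
    using conjunct1[OF eig[unfolded rose_adj_eigen_iff]] by simp
  also have "\<dots> = (\<Sum>k<m. 2 * (lam * \<psi> 0 / (lam^2 - 2)))"
  proof (rule sum.cong)
    fix k assume "k \<in> {..<m}"
    then show "\<psi> (3*k+1) + \<psi> (3*k+3) = 2 * (lam * \<psi> 0 / (lam^2 - 2))"
      using petal(1,2)[of k] by simp
  qed simp
  finally have "(lam * \<psi> 0) * (lam^2 - 2) = (lam * \<psi> 0) * (2 * real m)"
    using assms(3) by (simp add: field_simps)
  then show ?thesis using assms(2,4) by simp
qed

definition perron_vec_rose :: "nat \<Rightarrow> nat \<Rightarrow> real" where
  "perron_vec_rose m n = (if n = 0 then 2 * real m else if n mod 3 = 2 then 2 else sqrt (2 * real m + 2))"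

lemma perron_vec_rose_pos: "m \<ge> 1 \<Longrightarrow> perron_vec_rose m n > 0"
  by (simp add: perron_vec_rose_def add_pos_nonneg)

lemma perron_vec_rose_eigen:
  "\<forall>i\<in>rose_nodes m. (\<Sum>j\<in>rose_nodes m. rose_adj m i j * perron_vec_rose m j)
     = sqrt (2 * real m + 2) * perron_vec_rose m i"
  unfolding rose_adj_eigen_iff
proof (intro conjI allI impI)
  show "(\<Sum>k<m. perron_vec_rose m (3*k+1) + perron_vec_rose m (3*k+3))
      = sqrt (2 * real m + 2) * perron_vec_rose m 0"
    by (simp add: perron_vec_rose_def)
  have sq: "sqrt (2 * real m + 2) * sqrt (2 * real m + 2) = 2 * real m + 2" by simp
  fix k assume "k < m"
  show "perron_vec_rose m 0 + perron_vec_rose m (3*k+2) = sqrt (2 * real m + 2) * perron_vec_rose m (3*k+1)"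
    "perron_vec_rose m (3*k+1) + perron_vec_rose m (3*k+3) = sqrt (2 * real m + 2) * perron_vec_rose m (3*k+2)"
    "perron_vec_rose m 0 + perron_vec_rose m (3*k+2) = sqrt (2 * real m + 2) * perron_vec_rose m (3*k+3)"
    by (simp_all add: perron_vec_rose_def sq)
qed

lemma adj_eigenvalues_rose:
  assumes "m \<ge> 1" and "lam \<in> adj_eigenvalues (rose_nodes m) (rose_adj m)"
  shows "lam \<in> {0, sqrt 2, - sqrt 2, sqrt (2 * real m + 2), - sqrt (2 * real m + 2)}"
proof (rule ccontr)
  assume lam: "lam \<notin> {0, sqrt 2, - sqrt 2, sqrt (2 * real m + 2), - sqrt (2 * real m + 2)}"
  from assms(2) obtain \<psi> where nonzero: "\<exists>i\<in>rose_nodes m. \<psi> i \<noteq> 0"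
    and eig: "\<forall>i\<in>rose_nodes m. (\<Sum>j\<in>rose_nodes m. rose_adj m i j * \<psi> j) = lam * \<psi> i"
    unfolding adj_eigenvalues_def by blast
  have "lam \<noteq> 0" using lam by auto
  have "lam^2 \<noteq> 2"
  proof
    assume "lam^2 = 2"
    then have "lam = sqrt 2 \<or> lam = - sqrt 2" using real_sqrt_abs[of lam] by force
    then show False using lam by auto
  qed
  note petal = rose_adj_eigenvector_petal[OF eig \<open>lam \<noteq> 0\<close> \<open>lam^2 \<noteq> 2\<close>]
  show False
  proof (cases "\<psi> 0 = 0")
    case True
    obtain i where i: "i \<in> rose_nodes m" "\<psi> i \<noteq> 0" using nonzero by blast
    from i(1) show False
      by (cases rule: rose_node_cases) (use i(2) True petal in simp_all)
  next
    case False
    then have "lam^2 = sqrt (2 * real m + 2) ^ 2"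
      using rose_adj_eigenvalue[OF eig \<open>lam \<noteq> 0\<close> \<open>lam^2 \<noteq> 2\<close>] by simp
    then have "lam = sqrt (2 * real m + 2) \<or> lam = - sqrt (2 * real m + 2)"
      by (metis power2_eq_iff)
    then show False using lam by auto
  qed
qed

lemma lambda1_rose:
  assumes "m \<ge> 1"
  shows "lambda1 (rose_nodes m) (rose_adj m) = sqrt (2 * real m + 2)"
  unfolding lambda1_def
proof (rule Max_eqI)
  show "finite (adj_eigenvalues (rose_nodes m) (rose_adj m))"
    using adj_eigenvalues_rose[OF assms] by (meson finite.emptyI finite.insertI finite_subset subsetI)
  show "sqrt (2 * real m + 2) \<in> adj_eigenvalues (rose_nodes m) (rose_adj m)"
    unfolding adj_eigenvalues_def using perron_vec_rose_eigen[of m] assms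
    by (intro CollectI exI[of _ "perron_vec_rose m"] conjI bexI[of _ 0]) (auto simp: perron_vec_rose_def)
  fix y assume "y \<in> adj_eigenvalues (rose_nodes m) (rose_adj m)"
  then have "y \<in> {0, sqrt 2, - sqrt 2, sqrt (2 * real m + 2), - sqrt (2 * real m + 2)}"
    using adj_eigenvalues_rose[OF assms] by blast
  moreover have "sqrt 2 \<le> sqrt (2 * real m + 2)" by simp
  moreover have "0 \<le> sqrt (2 * real m + 2)" by simp
  moreover then have "- sqrt 2 \<le> sqrt (2 * real m + 2)" using real_sqrt_ge_zero[of 2] by linarith
  ultimately show "y \<le> sqrt (2 * real m + 2)" by auto
qed

lemma psi1_rose:
  assumes "m \<ge> 1"
  defines "\<psi> \<equiv> psi1 (rose_nodes m) (rose_adj m)"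
  shows "\<forall>i\<in>rose_nodes m. \<psi> i > 0"
    and "\<forall>i\<in>rose_nodes m. (\<Sum>j\<in>rose_nodes m. rose_adj m i j * \<psi> j) = sqrt (2 * real m + 2) * \<psi> i"
proof -
  define c where "c = sqrt (\<Sum>i\<in>rose_nodes m. (perron_vec_rose m i)^2)"
  have "(perron_vec_rose m i)^2 > 0" for i using perron_vec_rose_pos[OF assms(1), of i] by simp
  then have S: "(\<Sum>i\<in>rose_nodes m. (perron_vec_rose m i)^2) > 0"
    by (intro sum_pos) (auto simp: rose_nodes_def)
  then have c: "c > 0" "c^2 = (\<Sum>i\<in>rose_nodes m. (perron_vec_rose m i)^2)" unfolding c_def by auto
  let ?P = "\<lambda>\<phi>. (\<forall>i\<in>rose_nodes m. \<phi> i > 0) \<and> (\<Sum>i\<in>rose_nodes m. (\<phi> i)\<^sup>2) = 1 \<and>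
      (\<forall>i\<in>rose_nodes m. (\<Sum>j\<in>rose_nodes m. rose_adj m i j * \<phi> j) = lambda1 (rose_nodes m) (rose_adj m) * \<phi> i)"
  have "?P (\<lambda>i. perron_vec_rose m i / c)"
  proof (intro conjI ballI)
    show "perron_vec_rose m i / c > 0" for i using perron_vec_rose_pos[OF assms(1)] c by simp
    show "(\<Sum>i\<in>rose_nodes m. (perron_vec_rose m i / c)\<^sup>2) = 1"
      using c S by (simp add: power_divide flip: sum_divide_distrib)
    show "(\<Sum>j\<in>rose_nodes m. rose_adj m i j * (perron_vec_rose m j / c)) =
        lambda1 (rose_nodes m) (rose_adj m) * (perron_vec_rose m i / c)" if "i \<in> rose_nodes m" for i
      using perron_vec_rose_eigen[of m] that
      by (simp add: lambda1_rose[OF assms(1)] flip: sum_divide_distrib)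
  qed
  then have "?P \<psi>" unfolding \<psi>_def psi1_def by (rule someI[where P = ?P])
  then show "\<forall>i\<in>rose_nodes m. \<psi> i > 0"
    and "\<forall>i\<in>rose_nodes m. (\<Sum>j\<in>rose_nodes m. rose_adj m i j * \<psi> j) = sqrt (2 * real m + 2) * \<psi> i"
    unfolding lambda1_rose[OF assms(1)] by blast+
qed

lemma merw_rose:
  assumes "m \<ge> 1"
  shows "merw (rose_nodes m) (rose_adj m) = rose_walk m (real m / (real m + 1))"
proof (rule rose_walk_eqI)
  show "merw (rose_nodes m) (rose_adj m) a b = 0" if "rose_adj m a b = 0" for a b
    using that by (simp add: merw_def)
  fix k assume k: "k < m"
  define \<psi> where "\<psi> = psi1 (rose_nodes m) (rose_adj m)"
  define L where "L = sqrt (2 * real m + 2)"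
  have L: "L > 0" "L^2 = 2 * real m + 2" "L^2 \<noteq> 2" "L \<noteq> 0" using assms by (simp_all add: L_def)
  note eig = psi1_rose(2)[OF assms, folded \<psi>_def L_def]
  have \<psi>0: "\<psi> 0 > 0" using psi1_rose(1)[OF assms] by (simp add: \<psi>_def)
  note petal = rose_adj_eigenvector_petal[OF eig L(4,3) k, unfolded L(2)]
  have m: "real m > 0" using assms by simp
  have sq: "L * L = 2 * real m + 2" using L(2) by (simp add: power2_eq_square)
  have \<psi>1: "\<psi> (3*k+1) = L * \<psi> 0 / (2 * real m)" using petal(1) by simp
  have \<psi>: "\<psi> (3*k+1) = L * \<psi> 0 / (2 * real m)" "\<psi> (3*k+3) = L * \<psi> 0 / (2 * real m)"
    "\<psi> (3*k+2) = \<psi> 0 / real m"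
    using \<psi>1 petal(2,3) L(4) by simp_all
  have merw: "merw (rose_nodes m) (rose_adj m) a b = rose_adj m a b / L * (\<psi> b / \<psi> a)" for a b
    unfolding merw_def lambda1_rose[OF assms] \<psi>_def L_def ..
  show "merw (rose_nodes m) (rose_adj m) 0 (3*k+1) = 1 / (2 * real m)
      \<and> merw (rose_nodes m) (rose_adj m) 0 (3*k+3) = 1 / (2 * real m)
      \<and> merw (rose_nodes m) (rose_adj m) (3*k+1) 0 = real m / (real m + 1)
      \<and> merw (rose_nodes m) (rose_adj m) (3*k+1) (3*k+2) = 1 - real m / (real m + 1)
      \<and> merw (rose_nodes m) (rose_adj m) (3*k+2) (3*k+1) = 1/2
      \<and> merw (rose_nodes m) (rose_adj m) (3*k+2) (3*k+3) = 1/2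
      \<and> merw (rose_nodes m) (rose_adj m) (3*k+3) 0 = real m / (real m + 1)
      \<and> merw (rose_nodes m) (rose_adj m) (3*k+3) (3*k+2) = 1 - real m / (real m + 1)"
    unfolding merw rose_adj_petal[OF k] \<psi> using L(1) \<psi>0 m sq by (simp add: field_simps)
qed

section \<open>NBCRW\<close>

abbreviation rose_arcs :: "nat \<Rightarrow> (nat \<times> nat) set" where
  "rose_arcs m \<equiv> dir_edges (rose_nodes m) (rose_adj m)"

abbreviation rose_nbrs :: "nat \<Rightarrow> nat \<Rightarrow> nat set" where
  "rose_nbrs m j \<equiv> {l \<in> rose_nodes m. rose_adj m j l \<noteq> 0}"

lemma sum_nb_matrix:
  fixes v :: "nat \<times> nat \<Rightarrow> 'a::real_field"
  assumes "finite V" and "j \<in> V"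
  shows "(\<Sum>f\<in>dir_edges V a. of_real (nb_matrix (i, j) f) * v f) = (\<Sum>l\<in>{l \<in> V. a j l \<noteq> 0} - {i}. v (j, l))"
proof -
  define N where "N j = {l \<in> V. a j l \<noteq> 0}" for j
  have "dir_edges V a = Sigma V N" unfolding dir_edges_def N_def by auto
  moreover have "(\<Sum>i'\<in>V. \<Sum>j'\<in>N i'. of_real (nb_matrix (i, j) (i', j')) * v (i', j')) =
      (\<Sum>(i',j')\<in>Sigma V N. of_real (nb_matrix (i, j) (i', j')) * v (i', j'))"
    by (rule sum.Sigma) (use assms(1) in \<open>auto simp: N_def\<close>)
  ultimately have "(\<Sum>f\<in>dir_edges V a. of_real (nb_matrix (i, j) f) * v f) =
      (\<Sum>i'\<in>V. \<Sum>j'\<in>N i'. of_real (nb_matrix (i, j) (i', j')) * v (i', j'))"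
    by (simp add: case_prod_eta)
  also have "\<dots> = (\<Sum>i'\<in>V. if i' = j then (\<Sum>j'\<in>N j. if j' \<noteq> i then v (j, j') else 0) else 0)"
    by (intro sum.cong refl) (auto simp: nb_matrix_def intro!: sum.cong)
  also have "\<dots> = (\<Sum>j'\<in>N j. if j' \<noteq> i then v (j, j') else 0)"
    using assms by (simp add: sum.delta)
  also have "\<dots> = (\<Sum>l\<in>N j - {i}. v (j, l))"
    using assms(1) by (simp add: sum.inter_filter[symmetric] N_def set_diff_eq conj_commute)
  finally show ?thesis unfolding N_def .
qed

lemma rose_nbrs:
  assumes "k < m"
  shows "rose_nbrs m (3*k+1) = {0, 3*k+2}" "rose_nbrs m (3*k+2) = {3*k+1, 3*k+3}"
    "rose_nbrs m (3*k+3) = {0, 3*k+2}"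
  unfolding rose_adj_first[OF assms] rose_adj_middle[OF assms] rose_adj_last[OF assms]
  using assms by auto

lemma rose_nbrs_hub: "rose_nbrs m 0 = (\<lambda>k. 3*k+1) ` {..<m} \<union> (\<lambda>k. 3*k+3) ` {..<m}"
  by (auto simp: rose_adj_hub)

lemma sum_rose_nbrs_hub:
  fixes w :: "nat \<Rightarrow> 'a::comm_monoid_add"
  shows "(\<Sum>l\<in>rose_nbrs m 0. w l) = (\<Sum>k<m. w (3*k+1) + w (3*k+3))"
proof -
  have "inj_on (\<lambda>k. 3*k+1) {..<m}" "inj_on (\<lambda>k::nat. 3*k+3) {..<m}" by (auto simp: inj_on_def)
  moreover have "(\<lambda>k. 3*k+1) ` {..<m} \<inter> (\<lambda>k. 3*k+3) ` {..<m} = {}" by auto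
  ultimately show ?thesis
    unfolding rose_nbrs_hub by (simp add: sum.union_disjoint sum.reindex sum.distrib)
qed

lemma rose_arcs_cases:
  assumes "e \<in> rose_arcs m"
  obtains k where "k < m" "e \<in> {(0, 3*k+1), (3*k+1, 3*k+2), (3*k+2, 3*k+3), (3*k+3, 0),
    (0, 3*k+3), (3*k+3, 3*k+2), (3*k+2, 3*k+1), (3*k+1, 0)}"
proof -
  obtain a b where e: "e = (a, b)" by (cases e)
  then have "rose_adj m a b \<noteq> 0" using assms by (simp add: dir_edges_def)
  then show ?thesis using that e by (elim rose_adj_nonzero_cases) blast
qed

lemma rose_arcs_petal:
  assumes "k < m"
  shows "(0, 3*k+1) \<in> rose_arcs m" "(3*k+1, 3*k+2) \<in> rose_arcs m" "(3*k+2, 3*k+3) \<in> rose_arcs m"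
    "(3*k+3, 0) \<in> rose_arcs m" "(0, 3*k+3) \<in> rose_arcs m" "(3*k+3, 3*k+2) \<in> rose_arcs m"
    "(3*k+2, 3*k+1) \<in> rose_arcs m" "(3*k+1, 0) \<in> rose_arcs m"
  using rose_adj_petal[OF assms] assms unfolding dir_edges_def by auto

text \<open>An arc entering the hub continues along any of the other \<open>2m - 1\<close> hub arcs, every other
  arc has a unique continuation.\<close>
lemma nb_matrix_rose_rows:
  fixes v :: "nat \<times> nat \<Rightarrow> 'a::real_field"
  assumes k: "k < m"
  defines "S \<equiv> \<lambda>f. \<Sum>e\<in>rose_arcs m. of_real (nb_matrix f e) * v e"
    and "H \<equiv> (\<Sum>k'<m. v (0, 3*k'+1) + v (0, 3*k'+3))"
  shows "S (0, 3*k+1) = v (3*k+1, 3*k+2)" "S (3*k+1, 3*k+2) = v (3*k+2, 3*k+3)"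
    "S (3*k+2, 3*k+3) = v (3*k+3, 0)" "S (3*k+3, 0) = H - v (0, 3*k+3)"
    "S (0, 3*k+3) = v (3*k+3, 3*k+2)" "S (3*k+3, 3*k+2) = v (3*k+2, 3*k+1)"
    "S (3*k+2, 3*k+1) = v (3*k+1, 0)" "S (3*k+1, 0) = H - v (0, 3*k+1)"
proof -
  have V: "0 \<in> rose_nodes m" "3*k+1 \<in> rose_nodes m" "3*k+2 \<in> rose_nodes m" "3*k+3 \<in> rose_nodes m"
    using k by auto
  note nb = sum_nb_matrix[OF finite_rose_nodes]
  have D: "{0, 3*k+2} - {0} = {3*k+2}" "{0, 3*k+2} - {3*k+2} = {0}" "{3*k+1, 3*k+3} - {3*k+1} = {3*k+3}"
    "{3*k+1, 3*k+3} - {3*k+3} = {3*k+1}" by auto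
  show "S (0, 3*k+1) = v (3*k+1, 3*k+2)" "S (3*k+2, 3*k+1) = v (3*k+1, 0)"
    unfolding S_def nb[OF V(2)] rose_nbrs[OF k] D by simp_all
  show "S (3*k+1, 3*k+2) = v (3*k+2, 3*k+3)" "S (3*k+3, 3*k+2) = v (3*k+2, 3*k+1)"
    unfolding S_def nb[OF V(3)] rose_nbrs[OF k] D by simp_all
  show "S (3*k+2, 3*k+3) = v (3*k+3, 0)" "S (0, 3*k+3) = v (3*k+3, 3*k+2)"
    unfolding S_def nb[OF V(4)] rose_nbrs[OF k] D by simp_all
  have "3*k+1 \<in> rose_nbrs m 0" "3*k+3 \<in> rose_nbrs m 0" "finite (rose_nbrs m 0)"
    using rose_arcs_petal[OF k] by (auto simp: dir_edges_def)
  then show "S (3*k+3, 0) = H - v (0, 3*k+3)" "S (3*k+1, 0) = H - v (0, 3*k+1)"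
    unfolding S_def nb[OF V(1)] H_def by (simp_all only: sum_diff1 if_True sum_rose_nbrs_hub)
qed

text \<open>Along a petal an eigenvector of the non-backtracking matrix is geometric with ratio \<open>\<mu>\<close>;
  closing the cycle through the hub gives the conditions involving \<open>\<mu>\<^sup>4\<close>.\<close>
lemma nb_eigenvector_rose_petal:
  fixes v :: "nat \<times> nat \<Rightarrow> 'a::real_field"
  assumes k: "k < m" and eig: "\<forall>e\<in>rose_arcs m. (\<Sum>f\<in>rose_arcs m. of_real (nb_matrix e f) * v f) = \<mu> * v e"
  defines "H \<equiv> (\<Sum>k'<m. v (0, 3*k'+1) + v (0, 3*k'+3))"
  shows "v (3*k+1, 3*k+2) = \<mu> * v (0, 3*k+1)" "v (3*k+2, 3*k+3) = \<mu>^2 * v (0, 3*k+1)"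
    "v (3*k+3, 0) = \<mu>^3 * v (0, 3*k+1)" "H - v (0, 3*k+3) = \<mu>^4 * v (0, 3*k+1)"
    "v (3*k+3, 3*k+2) = \<mu> * v (0, 3*k+3)" "v (3*k+2, 3*k+1) = \<mu>^2 * v (0, 3*k+3)"
    "v (3*k+1, 0) = \<mu>^3 * v (0, 3*k+3)" "H - v (0, 3*k+1) = \<mu>^4 * v (0, 3*k+3)"
proof -
  note row = nb_matrix_rose_rows[OF k, of v, folded H_def]
  note arc = rose_arcs_petal[OF k]
  have "v (3*k+1, 3*k+2) = \<mu> * v (0, 3*k+1)" "v (3*k+2, 3*k+3) = \<mu> * v (3*k+1, 3*k+2)"
    "v (3*k+3, 0) = \<mu> * v (3*k+2, 3*k+3)" "H - v (0, 3*k+3) = \<mu> * v (3*k+3, 0)"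
    "v (3*k+3, 3*k+2) = \<mu> * v (0, 3*k+3)" "v (3*k+2, 3*k+1) = \<mu> * v (3*k+3, 3*k+2)"
    "v (3*k+1, 0) = \<mu> * v (3*k+2, 3*k+1)" "H - v (0, 3*k+1) = \<mu> * v (3*k+1, 0)"
    using eig arc row by auto
  then show "v (3*k+1, 3*k+2) = \<mu> * v (0, 3*k+1)" "v (3*k+2, 3*k+3) = \<mu>^2 * v (0, 3*k+1)"
    "v (3*k+3, 0) = \<mu>^3 * v (0, 3*k+1)" "H - v (0, 3*k+3) = \<mu>^4 * v (0, 3*k+1)"
    "v (3*k+3, 3*k+2) = \<mu> * v (0, 3*k+3)" "v (3*k+2, 3*k+1) = \<mu>^2 * v (0, 3*k+3)"
    "v (3*k+1, 0) = \<mu>^3 * v (0, 3*k+3)" "H - v (0, 3*k+1) = \<mu>^4 * v (0, 3*k+3)"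
    by (simp_all add: power_def mult.assoc)
qed

lemma nb_eigenvector_rose_eq_zero:
  fixes v :: "nat \<times> nat \<Rightarrow> 'a::real_field"
  assumes eig: "\<forall>e\<in>rose_arcs m. (\<Sum>f\<in>rose_arcs m. of_real (nb_matrix e f) * v f) = \<mu> * v e"
    and hub: "\<And>k. k < m \<Longrightarrow> v (0, 3*k+1) = 0 \<and> v (0, 3*k+3) = 0"
    and "e \<in> rose_arcs m"
  shows "v e = 0"
proof -
  obtain k where k: "k < m" and e: "e \<in> {(0, 3*k+1), (3*k+1, 3*k+2), (3*k+2, 3*k+3), (3*k+3, 0),
      (0, 3*k+3), (3*k+3, 3*k+2), (3*k+2, 3*k+1), (3*k+1, 0)}"
    using assms(3) by (rule rose_arcs_cases)
  from e show ?thesis using nb_eigenvector_rose_petal[OF k eig] hub[OF k] by auto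
qed

lemma cmod_eq_if_power4:
  fixes \<mu> :: complex
  assumes "\<mu>^4 = of_real c" "c \<ge> 0" "r \<ge> 0" "r^4 = c"
  shows "cmod \<mu> = r"
proof -
  have "cmod \<mu> ^ Suc 3 = r ^ Suc 3" using assms(1,2,4) by (simp add: norm_power[symmetric])
  then show ?thesis by (rule power_inject_base) (simp_all add: assms(3))
qed

lemma sqrt_sqrt_power4: "x \<ge> 0 \<Longrightarrow> sqrt (sqrt x) ^ 4 = (x::real)"
  using power_mult[of "sqrt (sqrt x)" 2 2] by simp

lemma nb_eigenvalues_rose_cmod:
  assumes m: "m \<ge> 1" and "\<mu> \<in> nb_eigenvalues (rose_nodes m) (rose_adj m)"
  shows "cmod \<mu> = 1 \<or> cmod \<mu> = sqrt (sqrt (2 * real m - 1))"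
proof -
  from assms(2) obtain v where nonzero: "\<exists>e\<in>rose_arcs m. v e \<noteq> 0"
    and eig: "\<forall>e\<in>rose_arcs m. (\<Sum>f\<in>rose_arcs m. complex_of_real (nb_matrix e f) * v f) = \<mu> * v e"
    unfolding nb_eigenvalues_def by blast
  define H where "H = (\<Sum>k<m. v (0, 3*k+1) + v (0, 3*k+3))"
  note petal = nb_eigenvector_rose_petal[OF _ eig, folded H_def]
  show ?thesis
  proof (cases "\<mu>^4 = 1 \<or> \<mu>^4 = -1")
    case True
    then have "cmod \<mu> ^ Suc 3 = 1 ^ Suc 3" by (auto simp: norm_power[symmetric])
    then have "cmod \<mu> = 1" by (rule power_inject_base) simp_all
    then show ?thesis ..
  next
    case False
    then have ne: "\<mu>^4 - 1 \<noteq> 0" "\<mu>^4 + 1 \<noteq> 0" by (auto simp: add_eq_0_iff2)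
    have symm: "v (0, 3*k+1) = v (0, 3*k+3)" if "k < m" for k
    proof -
      have "(\<mu>^4 - 1) * (v (0, 3*k+1) - v (0, 3*k+3)) = 0"
        using petal(4,8)[OF that] by (simp add: algebra_simps)
      then show ?thesis using ne by simp
    qed
    have hub: "(\<mu>^4 + 1) * v (0, 3*k+1) = H" if "k < m" for k
      using petal(4)[OF that] symm[OF that] by (simp add: algebra_simps)
    have "H = (\<Sum>k<m. 2 * v (0, 3*k+1))" unfolding H_def by (intro sum.cong) (use symm in auto)
    then have "(\<mu>^4 + 1) * H = (\<Sum>k<m. 2 * ((\<mu>^4 + 1) * v (0, 3*k+1)))"
      by (simp add: sum_distrib_left algebra_simps)
    also have "\<dots> = 2 * of_nat m * H" using hub by simp
    finally have "(\<mu>^4 + 1 - 2 * of_nat m) * H = 0" by (simp add: algebra_simps)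
    then have "H = 0 \<or> \<mu>^4 + 1 - 2 * of_nat m = 0" by (simp add: disj_commute)
    moreover have "\<mu>^4 = of_real (2 * real m - 1)" if "\<mu>^4 + 1 - 2 * of_nat m = 0"
      using that by (simp add: algebra_simps)
    ultimately consider "H = 0" | "\<mu>^4 = of_real (2 * real m - 1)" by blast
    then show ?thesis
    proof cases
      case 1
      then have "v (0, 3*k+1) = 0 \<and> v (0, 3*k+3) = 0" if "k < m" for k
        using hub[OF that] symm[OF that] ne by simp
      then show ?thesis using nb_eigenvector_rose_eq_zero[OF eig] nonzero by blast
    next
      case 2
      then have "cmod \<mu> = sqrt (sqrt (2 * real m - 1))"
        by (rule cmod_eq_if_power4) (use m in \<open>simp_all add: sqrt_sqrt_power4\<close>)
      then show ?thesis ..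
    qed
  qed
qed

definition nb_perron_vec_rose :: "real \<Rightarrow> nat \<times> nat \<Rightarrow> real" where
  "nb_perron_vec_rose r e =
    (if fst e = 0 then 1 else if snd e = 0 then r^3 else if fst e mod 3 = 2 then r^2 else r)"

lemma nb_perron_vec_rose_eigen:
  assumes r: "r^4 = 2 * real m - 1"
  shows "\<forall>e\<in>rose_arcs m. (\<Sum>f\<in>rose_arcs m. of_real (nb_matrix e f) * (of_real (nb_perron_vec_rose r f) :: 'a::real_field))
    = of_real r * of_real (nb_perron_vec_rose r e)"
proof
  fix e assume "e \<in> rose_arcs m"
  then obtain k where k: "k < m" and e: "e \<in> {(0, 3*k+1), (3*k+1, 3*k+2), (3*k+2, 3*k+3), (3*k+3, 0),
      (0, 3*k+3), (3*k+3, 3*k+2), (3*k+2, 3*k+1), (3*k+1, 0)}"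
    by (rule rose_arcs_cases)
  define R where "R = (of_real r :: 'a)"
  define w where "w f = (of_real (nb_perron_vec_rose r f) :: 'a)" for f
  have w: "w (0, j) = 1" "w (3*k+1, 3*k+2) = R" "w (3*k+2, 3*k+3) = R^2" "w (3*k+3, 0) = R^3"
    "w (3*k+3, 3*k+2) = R" "w (3*k+2, 3*k+1) = R^2" "w (3*k+1, 0) = R^3" for j
    unfolding w_def R_def nb_perron_vec_rose_def by simp_all
  have "(\<Sum>k'<m. w (0, 3*k'+1) + w (0, 3*k'+3)) - 1 = R^4"
    using r unfolding w_def R_def nb_perron_vec_rose_def by (simp flip: of_real_power)
  then have "(\<Sum>f\<in>rose_arcs m. of_real (nb_matrix e f) * w f) = R * w e"
    using e nb_matrix_rose_rows[OF k, of w] w by (elim insertE emptyE) (simp_all add: power_def)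
  then show "(\<Sum>f\<in>rose_arcs m. of_real (nb_matrix e f) * (of_real (nb_perron_vec_rose r f) :: 'a))
      = of_real r * of_real (nb_perron_vec_rose r e)"
    unfolding w_def R_def .
qed

lemma nb_leading_rose:
  assumes m: "m \<ge> 1"
  shows "nb_leading (rose_nodes m) (rose_adj m) = sqrt (sqrt (2 * real m - 1))"
  unfolding nb_leading_def
proof (rule Max_eqI)
  define r where "r = sqrt (sqrt (2 * real m - 1))"
  have r: "r^4 = 2 * real m - 1" "r \<ge> 1" using m by (simp_all add: r_def sqrt_sqrt_power4)
  have sub: "cmod ` nb_eigenvalues (rose_nodes m) (rose_adj m) \<subseteq> {1, r}"
    using nb_eigenvalues_rose_cmod[OF m] by (auto simp: r_def)
  then show "finite (cmod ` nb_eigenvalues (rose_nodes m) (rose_adj m))"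
    by (rule finite_subset) simp
  show "y \<le> r" if "y \<in> cmod ` nb_eigenvalues (rose_nodes m) (rose_adj m)" for y
    using that sub r(2) by auto
  have "complex_of_real r \<in> nb_eigenvalues (rose_nodes m) (rose_adj m)"
    unfolding nb_eigenvalues_def
  proof (intro CollectI exI[of _ "\<lambda>f. complex_of_real (nb_perron_vec_rose r f)"] conjI)
    show "\<exists>e\<in>rose_arcs m. complex_of_real (nb_perron_vec_rose r e) \<noteq> 0"
      using rose_arcs_petal(1)[of 0 m] m by (intro bexI[of _ "(0, 1)"]) (auto simp: nb_perron_vec_rose_def)
  qed (rule nb_perron_vec_rose_eigen[OF r(1)])
  then show "r \<in> cmod ` nb_eigenvalues (rose_nodes m) (rose_adj m)"
    using r(2) by (intro image_eqI) simp_all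
qed

lemma nb_vec_rose:
  assumes m: "m \<ge> 2"
  defines "v \<equiv> nb_vec (rose_nodes m) (rose_adj m)" and "r \<equiv> sqrt (sqrt (2 * real m - 1))"
  obtains \<alpha> where "\<alpha> \<noteq> 0" "\<And>k. k < m \<Longrightarrow> v (0, 3*k+1) = \<alpha> \<and> v (0, 3*k+3) = \<alpha> \<and>
      v (3*k+1, 3*k+2) = r * \<alpha> \<and> v (3*k+2, 3*k+3) = r^2 * \<alpha> \<and> v (3*k+3, 0) = r^3 * \<alpha> \<and>
      v (3*k+3, 3*k+2) = r * \<alpha> \<and> v (3*k+2, 3*k+1) = r^2 * \<alpha> \<and> v (3*k+1, 0) = r^3 * \<alpha>"
proof -
  have m1: "m \<ge> 1" using m by simp
  have r: "r^4 = 2 * real m - 1" using m by (simp add: r_def sqrt_sqrt_power4)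
  let ?P = "\<lambda>v. (\<forall>e\<in>rose_arcs m. v e \<ge> 0) \<and> (\<exists>e\<in>rose_arcs m. v e \<noteq> 0) \<and>
      (\<forall>e\<in>rose_arcs m. (\<Sum>f\<in>rose_arcs m. nb_matrix e f * v f) = nb_leading (rose_nodes m) (rose_adj m) * v e)"
  have "?P (nb_perron_vec_rose r)"
  proof (intro conjI)
    show "\<forall>e\<in>rose_arcs m. nb_perron_vec_rose r e \<ge> 0" using m by (auto simp: nb_perron_vec_rose_def r_def)
    show "\<exists>e\<in>rose_arcs m. nb_perron_vec_rose r e \<noteq> 0"
      using rose_arcs_petal(1)[of 0 m] m by (intro bexI[of _ "(0, 1)"]) (auto simp: nb_perron_vec_rose_def)
    show "\<forall>e\<in>rose_arcs m. (\<Sum>f\<in>rose_arcs m. nb_matrix e f * nb_perron_vec_rose r f)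
        = nb_leading (rose_nodes m) (rose_adj m) * nb_perron_vec_rose r e"
      using nb_perron_vec_rose_eigen[OF r, where 'a=real] by (simp add: nb_leading_rose[OF m1] r_def)
  qed
  then have "?P v" unfolding v_def nb_vec_def by (rule someI[where P = ?P])
  then have eig: "\<forall>e\<in>rose_arcs m. (\<Sum>f\<in>rose_arcs m. of_real (nb_matrix e f) * v f) = r * v e"
    and nonzero: "\<exists>e\<in>rose_arcs m. v e \<noteq> 0"
    by (simp_all add: nb_leading_rose[OF m1] r_def)
  define H where "H = (\<Sum>k<m. v (0, 3*k+1) + v (0, 3*k+3))"
  note petal = nb_eigenvector_rose_petal[OF _ eig, folded H_def]
  have ne: "r^4 - 1 \<noteq> 0" "r^4 + 1 \<noteq> 0" using r m by simp_all
  have symm: "v (0, 3*k+1) = v (0, 3*k+3)" if "k < m" for k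
  proof -
    have "(r^4 - 1) * (v (0, 3*k+1) - v (0, 3*k+3)) = 0"
      using petal(4,8)[OF that] by (simp add: algebra_simps)
    then show ?thesis using ne by simp
  qed
  define \<alpha> where "\<alpha> = H / (r^4 + 1)"
  have hub: "v (0, 3*k+1) = \<alpha>" if "k < m" for k
  proof -
    have "(r^4 + 1) * v (0, 3*k+1) = H" using petal(4)[OF that] symm[OF that] by (simp add: algebra_simps)
    then show ?thesis unfolding \<alpha>_def using ne by (simp add: field_simps)
  qed
  have vals: "v (0, 3*k+1) = \<alpha> \<and> v (0, 3*k+3) = \<alpha> \<and>
      v (3*k+1, 3*k+2) = r * \<alpha> \<and> v (3*k+2, 3*k+3) = r^2 * \<alpha> \<and> v (3*k+3, 0) = r^3 * \<alpha> \<and>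
      v (3*k+3, 3*k+2) = r * \<alpha> \<and> v (3*k+2, 3*k+1) = r^2 * \<alpha> \<and> v (3*k+1, 0) = r^3 * \<alpha>" if "k < m" for k
    using hub[OF that] symm[OF that] petal(1-3,5-7)[OF that] by simp
  have "\<alpha> \<noteq> 0"
  proof
    assume "\<alpha> = 0"
    then have "v e = 0" if "e \<in> rose_arcs m" for e
      using vals by (intro nb_eigenvector_rose_eq_zero[OF eig _ that]) simp
    then show False using nonzero by blast
  qed
  then show ?thesis using that vals by blast
qed

lemma nbcrw_rose:
  assumes m: "m \<ge> 2"
  shows "nbcrw (rose_nodes m) (rose_adj m) = rose_walk m (real m / (real m + sqrt (2 * real m - 1)))"
proof -
  define v where "v = nb_vec (rose_nodes m) (rose_adj m)"
  define x where "x = nb_centrality (rose_nodes m) (rose_adj m)"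
  define r where "r = sqrt (sqrt (2 * real m - 1))"
  define s where "s = sqrt (2 * real m - 1)"
  have r: "r > 0" "r^2 = s" "s > 0" using m by (simp_all add: r_def s_def)
  obtain \<alpha> where "\<alpha> \<noteq> 0" and v: "\<And>k. k < m \<Longrightarrow> v (0, 3*k+1) = \<alpha> \<and> v (0, 3*k+3) = \<alpha> \<and>
      v (3*k+1, 3*k+2) = r * \<alpha> \<and> v (3*k+2, 3*k+3) = r^2 * \<alpha> \<and> v (3*k+3, 0) = r^3 * \<alpha> \<and>
      v (3*k+3, 3*k+2) = r * \<alpha> \<and> v (3*k+2, 3*k+1) = r^2 * \<alpha> \<and> v (3*k+1, 0) = r^3 * \<alpha>"
    using nb_vec_rose[OF m] unfolding v_def[symmetric] r_def[symmetric] by metis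
  have x: "x i = (\<Sum>l\<in>rose_nbrs m i. v (i, l))" for i unfolding x_def v_def nb_centrality_def ..
  define c where "c = r^3 * \<alpha> + r * \<alpha>"
  have "c = \<alpha> * (r * (r^2 + 1))" unfolding c_def by (simp add: algebra_simps power_def)
  moreover have "r^2 + 1 > 0" using zero_le_power2[of r] by linarith
  ultimately have "c \<noteq> 0" using \<open>\<alpha> \<noteq> 0\<close> r(1) by simp
  have x0: "x 0 = 2 * real m * \<alpha>"
  proof -
    have "x 0 = (\<Sum>k<m. v (0, 3*k+1) + v (0, 3*k+3))" unfolding x sum_rose_nbrs_hub ..
    also have "\<dots> = (\<Sum>k<m. 2 * \<alpha>)" by (intro sum.cong) (use v in auto)
    finally show ?thesis by simp
  qed
  have xk: "x (3*k+1) = c" "x (3*k+2) = 2 * r^2 * \<alpha>" "x (3*k+3) = c" if k: "k < m" for k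
  proof -
    have "(0::nat) \<noteq> 3*k+2" "3*k+1 \<noteq> 3*k+3" by simp_all
    then show "x (3*k+1) = c" "x (3*k+2) = 2 * r^2 * \<alpha>" "x (3*k+3) = c"
      unfolding x rose_nbrs[OF k] c_def using v[OF k] by (simp_all add: add.commute)
  qed
  show ?thesis
  proof (rule rose_walk_eqI)
    show "nbcrw (rose_nodes m) (rose_adj m) a b = 0" if "rose_adj m a b = 0" for a b
      using that by (simp add: nbcrw_def)
    fix k assume k: "k < m"
    have out: "(\<Sum>j\<in>rose_nodes m. rose_adj m 0 j * x j) = real m * (2 * c)"
      "(\<Sum>j\<in>rose_nodes m. rose_adj m (3*k+1) j * x j) = 2 * \<alpha> * (real m + s)"
      "(\<Sum>j\<in>rose_nodes m. rose_adj m (3*k+2) j * x j) = c + c"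
      "(\<Sum>j\<in>rose_nodes m. rose_adj m (3*k+3) j * x j) = 2 * \<alpha> * (real m + s)"
    proof -
      have "(\<Sum>k<m. x (3*k+1) + x (3*k+3)) = (\<Sum>k<m. 2 * c)"
      proof (rule sum.cong)
        fix k' assume "k' \<in> {..<m}"
        then show "x (3*k'+1) + x (3*k'+3) = 2 * c" using xk(1,3)[of k'] by simp
      qed simp
      then show "(\<Sum>j\<in>rose_nodes m. rose_adj m 0 j * x j) = real m * (2 * c)"
        unfolding sum_rose_adj_hub by simp
      show "(\<Sum>j\<in>rose_nodes m. rose_adj m (3*k+1) j * x j) = 2 * \<alpha> * (real m + s)"
        "(\<Sum>j\<in>rose_nodes m. rose_adj m (3*k+2) j * x j) = c + c"
        "(\<Sum>j\<in>rose_nodes m. rose_adj m (3*k+3) j * x j) = 2 * \<alpha> * (real m + s)"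
        unfolding sum_rose_adj_first[OF k] sum_rose_adj_middle[OF k] sum_rose_adj_last[OF k]
          x0 xk[OF k] r(2)[symmetric] by (simp_all add: algebra_simps)
    qed
    have nb: "nbcrw (rose_nodes m) (rose_adj m) a b
        = rose_adj m a b * x b / (\<Sum>j\<in>rose_nodes m. rose_adj m a j * x j)" for a b
      unfolding nbcrw_def x_def ..
    have "real m + s \<noteq> 0" "real m \<noteq> 0" using r(3) m by simp_all
    then have q: "1 * c / (real m * (2 * c)) = 1 / (2 * real m)" "1 * c / (c + c) = 1 / 2"
      "1 * (2 * real m * \<alpha>) / (2 * \<alpha> * (real m + s)) = real m / (real m + s)"
      "1 * (2 * s * \<alpha>) / (2 * \<alpha> * (real m + s)) = 1 - real m / (real m + s)"
    proof -
      have frac: "a / b = a' / b'" if "b \<noteq> 0" "b' \<noteq> 0" "a * b' = a' * b" for a b a' b' :: real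
        using that by (simp add: frac_eq_eq)
      have "1 - real m / (real m + s) = s / (real m + s)" using \<open>real m + s \<noteq> 0\<close> by (simp add: field_simps)
      then show "1 * c / (real m * (2 * c)) = 1 / (2 * real m)" "1 * c / (c + c) = 1 / 2"
        "1 * (2 * real m * \<alpha>) / (2 * \<alpha> * (real m + s)) = real m / (real m + s)"
        "1 * (2 * s * \<alpha>) / (2 * \<alpha> * (real m + s)) = 1 - real m / (real m + s)"
        using \<open>c \<noteq> 0\<close> \<open>\<alpha> \<noteq> 0\<close> \<open>real m + s \<noteq> 0\<close> \<open>real m \<noteq> 0\<close> by (auto intro!: frac)
    qed
    show "nbcrw (rose_nodes m) (rose_adj m) 0 (3*k+1) = 1 / (2 * real m)
      \<and> nbcrw (rose_nodes m) (rose_adj m) 0 (3*k+3) = 1 / (2 * real m)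
      \<and> nbcrw (rose_nodes m) (rose_adj m) (3*k+1) 0 = real m / (real m + sqrt (2 * real m - 1))
      \<and> nbcrw (rose_nodes m) (rose_adj m) (3*k+1) (3*k+2) = 1 - real m / (real m + sqrt (2 * real m - 1))
      \<and> nbcrw (rose_nodes m) (rose_adj m) (3*k+2) (3*k+1) = 1/2
      \<and> nbcrw (rose_nodes m) (rose_adj m) (3*k+2) (3*k+3) = 1/2
      \<and> nbcrw (rose_nodes m) (rose_adj m) (3*k+3) 0 = real m / (real m + sqrt (2 * real m - 1))
      \<and> nbcrw (rose_nodes m) (rose_adj m) (3*k+3) (3*k+2) = 1 - real m / (real m + sqrt (2 * real m - 1))"
      unfolding nb out rose_adj_petal[OF k] xk[OF k] x0 s_def[symmetric] r(2) q by simp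
  qed
qed

section \<open>Mean hitting times\<close>

lemma rose_walk_mean_formula_ratio:
  fixes M t :: real
  assumes "M > 0" "t > 0"
  defines "p \<equiv> M / (M + t)"
  shows "M * (18 * M - 12 + 16 * p - (4 + 12 * M) * p^2) / (3 * (3 * M + 1) * p * (1 - p))
    = ((18 * M - 12) * (M + t)^2 + 16 * M * (M + t) - (4 + 12 * M) * M^2) / (3 * (3 * M + 1) * t)"
proof -
  define N where "N = (18 * M - 12) * (M + t)^2 + 16 * M * (M + t) - (4 + 12 * M) * M^2"
  have P: "(M + t)^2 \<noteq> 0" "M + t \<noteq> 0" using assms by simp_all
  have pP: "p * (M + t) = M" using P unfolding p_def by simp
  have "(18 * M - 12 + 16 * p - (4 + 12 * M) * p^2) * (M + t)^2
      = (18 * M - 12) * (M + t)^2 + 16 * (p * (M + t)) * (M + t) - (4 + 12 * M) * (p * (M + t))^2"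
    by algebra
  also have "\<dots> = N" unfolding pP N_def ..
  finally have num: "18 * M - 12 + 16 * p - (4 + 12 * M) * p^2 = N / (M + t)^2"
    using P by (simp add: eq_divide_eq)
  have "p * (1 - p) * (M + t)^2 = (p * (M + t)) * ((M + t) - p * (M + t))" by algebra
  then have den: "3 * (3 * M + 1) * p * (1 - p) = 3 * (3 * M + 1) * M * t / (M + t)^2"
    using P unfolding pP by (simp add: eq_divide_eq)
  show ?thesis using P assms unfolding num den by (simp add: N_def)
qed

lemma mean_hitting_time_turw_rose:
  assumes "m \<ge> 1"
  shows "mean_hitting_time (turw (rose_nodes m) (rose_adj m)) (rose_nodes m)
    = 20 * real m * (3 * real m - 1) / (3 * (3 * real m + 1))"
  unfolding turw_rose[OF assms] mean_hitting_time_rose_walk[OF assms, of "1/2", simplified]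
  by (simp add: field_simps power2_eq_square)

lemma mean_hitting_time_merw_rose:
  assumes "m \<ge> 1"
  shows "mean_hitting_time (merw (rose_nodes m) (rose_adj m)) (rose_nodes m)
    = (6 * real m ^ 3 + 36 * real m ^ 2 + 10 * real m - 12) / (9 * real m + 3)"
proof -
  have p: "0 < real m / (real m + 1)" "real m / (real m + 1) < 1" using assms by simp_all
  have "mean_hitting_time (merw (rose_nodes m) (rose_adj m)) (rose_nodes m)
    = ((18 * real m - 12) * (real m + 1)^2 + 16 * real m * (real m + 1) - (4 + 12 * real m) * real m ^ 2)
      / (3 * (3 * real m + 1) * 1)"
    unfolding merw_rose[OF assms] mean_hitting_time_rose_walk[OF assms p]
    by (rule rose_walk_mean_formula_ratio) (use assms in simp_all)
  then show ?thesis by (simp add: algebra_simps power2_eq_square power3_eq_cube)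
qed

lemma mean_hitting_time_nbcrw_rose:
  assumes "m \<ge> 2"
  defines "s \<equiv> sqrt (2 * real m - 1)"
  shows "mean_hitting_time (nbcrw (rose_nodes m) (rose_adj m)) (rose_nodes m)
    = (2 * real m ^ 3 + 12 * real m ^ 2 - 14 * real m + 4) / ((3 * real m + 1) * s)
      + (36 * real m ^ 2 - 8 * real m) / (3 * (3 * real m + 1))"
proof -
  have m: "m \<ge> 1" using assms by simp
  have s: "s > 0" "s^2 = 2 * real m - 1" using assms by (simp_all add: s_def)
  have p: "0 < real m / (real m + s)" "real m / (real m + s) < 1" using m s by simp_all
  have "mean_hitting_time (nbcrw (rose_nodes m) (rose_adj m)) (rose_nodes m)
    = ((18 * real m - 12) * (real m + s)^2 + 16 * real m * (real m + s) - (4 + 12 * real m) * real m ^ 2)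
      / (3 * (3 * real m + 1) * s)"
    unfolding nbcrw_rose[OF assms(1), folded s_def] mean_hitting_time_rose_walk[OF m p]
    by (rule rose_walk_mean_formula_ratio) (use m s in simp_all)
  also have "(18 * real m - 12) * (real m + s)^2 + 16 * real m * (real m + s) - (4 + 12 * real m) * real m ^ 2
    = 3 * (2 * real m ^ 3 + 12 * real m ^ 2 - 14 * real m + 4) + (36 * real m ^ 2 - 8 * real m) * s"
    using s(2) by algebra
  also have "(3 * (2 * real m ^ 3 + 12 * real m ^ 2 - 14 * real m + 4) + (36 * real m ^ 2 - 8 * real m) * s)
      / (3 * (3 * real m + 1) * s)
    = (2 * real m ^ 3 + 12 * real m ^ 2 - 14 * real m + 4) / ((3 * real m + 1) * s)
      + (36 * real m ^ 2 - 8 * real m) / (3 * (3 * real m + 1))"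
  proof -
    have split: "(3 * a + b * s) / (3 * K * s) = a / (K * s) + b / (3 * K)" if "K \<noteq> 0" for a b K :: real
      using that s(1) by (simp add: field_simps)
    show ?thesis by (rule split) simp
  qed
  finally show ?thesis .
qed

theorem theorem7:
  fixes m :: nat
  assumes "m \<ge> 2"
  defines "V \<equiv> rose_nodes m" and "A \<equiv> rose_adj m" and "M \<equiv> real m" and "N \<equiv> real (3*m+1)"
  shows "mean_hitting_time (turw V A) V = 20 * M * (3*M - 1) / (3 * (3*M + 1))
       \<and> mean_hitting_time (turw V A) V = 20 * (N - 1) * (N - 2) / (9 * N)
       \<and> mean_hitting_time (nbcrw V A) V =
           (2*M^3 + 12*M^2 - 14*M + 4) / ((3*M + 1) * sqrt (2*M - 1)) + (36*M^2 - 8*M) / (3 * (3*M + 1))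
       \<and> mean_hitting_time (nbcrw V A) V =
           (2*N^2 + 30*N - 192) / (9 * sqrt (6*N - 15))
           + (268 + 20 * sqrt (6*N - 15)) / (9 * N * sqrt (6*N - 15)) + (12*N - 32) / 9
       \<and> mean_hitting_time (merw V A) V = (6*M^3 + 36*M^2 + 10*M - 12) / (9*M + 3)
       \<and> mean_hitting_time (merw V A) V = (2*N^3 + 30*N^2 - 36*N - 104) / (27 * N)"
proof -
  have m: "m \<ge> 1" "M \<ge> 2" using assms(1) by (simp_all add: M_def)
  have N: "N = 3 * M + 1" by (simp add: N_def M_def)
  define s where "s = sqrt (2 * M - 1)"
  have "6 * N - 15 = 3^2 * (2 * M - 1)" by (simp add: N algebra_simps)
  then have s: "s > 0" "s^2 = 2 * M - 1" "sqrt (6 * N - 15) = 3 * s"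
    using m(2) unfolding s_def by (simp_all only: real_sqrt_mult) simp_all
  show ?thesis
    unfolding V_def A_def mean_hitting_time_turw_rose[OF m(1)] mean_hitting_time_merw_rose[OF m(1)]
      mean_hitting_time_nbcrw_rose[OF assms(1)] M_def[symmetric] s_def[symmetric] s(3)
  proof (intro conjI)
    show "20 * M * (3 * M - 1) / (3 * (3 * M + 1)) = 20 * (N - 1) * (N - 2) / (9 * N)"
      using m(2) by (simp add: N field_simps)
    show "(6 * M^3 + 36 * M^2 + 10 * M - 12) / (9 * M + 3) = (2 * N^3 + 30 * N^2 - 36 * N - 104) / (27 * N)"
      using m(2) by (simp add: N field_simps) algebra
    show "(2 * M^3 + 12 * M^2 - 14 * M + 4) / ((3 * M + 1) * s) + (36 * M^2 - 8 * M) / (3 * (3 * M + 1))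
      = (2 * N^2 + 30 * N - 192) / (9 * (3 * s)) + (268 + 20 * (3 * s)) / (9 * N * (3 * s)) + (12 * N - 32) / 9"
    proof -
      have "N \<noteq> 0" "s \<noteq> 0" using m(2) s(1) by (simp_all add: N)
      then show ?thesis unfolding N[symmetric] by (simp add: field_simps) (use N s(2) in algebra)
    qed
  qed simp_all
qed

end
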